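(* Let $A(G_1,G_2)$ be an adjacency graph in the SCaJ model and let $B$ be one of its components. Then: (a) if $B$ is an $N$-shaped component, $\#\mathrm{ST}(\{B\})=1$; (b) if $B$ is a $W$-shaped component of size $w\ge 1$, $\#\mathrm{ST}(\{B\})=2^{w-1}$; (c) if $B$ is an $M$-shaped component of size $m\ge1$, $\#\mathrm{ST}(\{B\})=2^{m-1}$; (d) if $B$ is a non-trivial crown of size $c$, $\#\mathrm{ST}(\{B\})=c\cdot 2^{c-1}$.
   Context: A genome is a finite directed graph whose edges (genes) carry pairwise distinct labels, with no isolated vertices and every vertex of total degree 1 or 2. Each gene $X$ has extremities $X^t$ (tail) and $X^h$ (head). A degree-2 vertex is an adjacency, identified with the unordered pair of extremities meeting there; a degree-1 vertex is a telomere, identified with its single extremity. In the Single Cut-and-Join (SCaJ) model the operations are: cut (adjacency $ab$ becomes telomeres $a,b$), join (telomeres $a,b$ become adjacency $ab$), and cut-join (adjacency $ab$ and telomere $c$ become adjacency $ac$ and telomere $b$). The adjacency graph $A(G_1,G_2)$ of two genomes on the same gene set is the bipartite multigraph on $V_1\sqcup V_2$, $V_i$ the adjacencies and telomeres of $G_i$, with as many edges between $u\in V_1$, $v\in V_2$ as shared extremities; operations on $G_1$ act on the vertices of $V_1$ accordingly. Its components are paths and even cycles. The size of a component $B$ is $\lfloor |E(B)|/2\rfloor$. A $W$-shaped component is an even-length path with both endpoints in $V_1$; an $M$-shaped component is an even-length path with both endpoints in $V_2$; an $N$-shaped component is an odd-length path (trivial if it is a single edge); a crown is a cycle, trivial if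 it has size 1. For a set $\mathcal B'$ of components, $d(\mathcal B')=\sum_{B\in\mathcal B'}\mathrm{size}(B)-\#\{\text{trivial crowns in }\mathcal B'\}+\#\{\text{non-trivial crowns in }\mathcal B'\}$; it is the minimum number of operations that turn all components of $\mathcal B'$ into trivial components without acting on other components. $\#\mathrm{ST}(\mathcal B')$ denotes the number of sequences of $d(\mathcal B')$ operations, acting only on components of $\mathcal B'$ (and the components produced from them), that transform all components of $\mathcal B'$ into trivial components and in which all components of $\mathcal B'$ sort together, where in a scenario two components $A,B$ satisfy $A\sim B$ if $A=B$ or some cut-join joins an extremity of $A$ and an extremity of $B$ into an adjacency, and "sort together" is the transitive closure of $\sim$ (for $|\mathcal B'|=1$ this condition is vacuous). *)

theory Defs
  imports Main
begin

datatype ext = Tail | Head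

type_synonym 'g extremity = "'g \<times> ext"

text \<open>A genome on the gene set X is represented by its vertex set: each vertex is
identified with the set of extremities meeting there (an adjacency = 2 extremities,
a telomere = 1 extremity).  No isolated vertices and all degrees 1 or 2 means the
vertex sets form a partition of the extremities of X into blocks of size 1 or 2.\<close>

definition extremities :: "'g set \<Rightarrow> 'g extremity set" where
  "extremities X = X \<times> UNIV"

definition genome :: "'g set \<Rightarrow> 'g extremity set set \<Rightarrow> bool" where
  "genome X G \<longleftrightarrow> finite X \<and> \<Union>G = extremities X
     \<and> (\<forall>u\<in>G. card u = 1 \<or> card u = 2)
     \<and> (\<forall>u\<in>G. \<forall>v\<in>G. u \<noteq> v \<longrightarrow> u \<inter> v = {})"

datatype 'e scaj_op =
    Cut "'e set"
  | Join "'e set"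
  | CutJoin 'e 'e 'e      \<comment> \<open>adjacency {a,b} and telomere c become adjacency {a,c} and telomere b\<close>

fun op_valid :: "'e set set \<Rightarrow> 'e scaj_op \<Rightarrow> bool" where
  "op_valid G (Cut s) \<longleftrightarrow> s \<in> G \<and> card s = 2"
| "op_valid G (Join s) \<longleftrightarrow> card s = 2 \<and> (\<forall>x\<in>s. {x} \<in> G)"
| "op_valid G (CutJoin a b c) \<longleftrightarrow> a \<noteq> b \<and> {a, b} \<in> G \<and> {c} \<in> G"

fun op_apply :: "'e set set \<Rightarrow> 'e scaj_op \<Rightarrow> 'e set set" where
  "op_apply G (Cut s) = (G - {s}) \<union> {{x} | x. x \<in> s}"
| "op_apply G (Join s) = (G - {{x} | x. x \<in> s}) \<union> {s}"
| "op_apply G (CutJoin a b c) = (G - {{a, b}, {c}}) \<union> {{a, c}, {b}}"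

fun op_ext :: "'e scaj_op \<Rightarrow> 'e set" where
  "op_ext (Cut s) = s"
| "op_ext (Join s) = s"
| "op_ext (CutJoin a b c) = {a, b, c}"

fun valid_seq :: "'e set set \<Rightarrow> 'e scaj_op list \<Rightarrow> bool" where
  "valid_seq G [] = True"
| "valid_seq G (o1 # os) \<longleftrightarrow> op_valid G o1 \<and> valid_seq (op_apply G o1) os"

definition run_seq :: "'e set set \<Rightarrow> 'e scaj_op list \<Rightarrow> 'e set set" where
  "run_seq G os = foldl op_apply G os"

text \<open>The edges of A(G1,G2) are the extremities (the extremity x joins the G1-vertex
and the G2-vertex containing x).  A component is identified with its edge set:
two edges are linked if they share a G1-vertex or a G2-vertex.\<close>

definition link :: "'e set set \<Rightarrow> 'e set set \<Rightarrow> ('e \<times> 'e) set" where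
  "link G1 G2 = {(x, y). \<exists>u \<in> G1 \<union> G2. x \<in> u \<and> y \<in> u}"

definition components :: "'e set set \<Rightarrow> 'e set set \<Rightarrow> 'e set set" where
  "components G1 G2 = {(link G1 G2)\<^sup>* `` {x} | x. x \<in> \<Union>G1}"

text \<open>Vertices of A(G1,G2) are tagged Inl (side V1) / Inr (side V2); the degree of a
vertex u in A is card u.  Degree-1 vertices of a component C:\<close>

definition deg1_vertices :: "'e set set \<Rightarrow> 'e set set \<Rightarrow> 'e set \<Rightarrow> ('e set + 'e set) set" where
  "deg1_vertices G1 G2 C =
     Inl ` {u \<in> G1. u \<subseteq> C \<and> card u = 1} \<union> Inr ` {u \<in> G2. u \<subseteq> C \<and> card u = 1}"

text \<open>(All degrees are 1 or 2, so a component is a path iff it has exactly two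
degree-1 vertices (its endpoints) and a cycle iff it has none; its length is card C.)\<close>

definition is_path_comp :: "'e set set \<Rightarrow> 'e set set \<Rightarrow> 'e set \<Rightarrow> bool" where
  "is_path_comp G1 G2 C \<longleftrightarrow> card (deg1_vertices G1 G2 C) = 2"

definition is_crown :: "'e set set \<Rightarrow> 'e set set \<Rightarrow> 'e set \<Rightarrow> bool" where
  "is_crown G1 G2 C \<longleftrightarrow> deg1_vertices G1 G2 C = {}"

definition W_shaped :: "'e set set \<Rightarrow> 'e set set \<Rightarrow> 'e set \<Rightarrow> bool" where
  "W_shaped G1 G2 C \<longleftrightarrow> is_path_comp G1 G2 C \<and> even (card C)
     \<and> deg1_vertices G1 G2 C \<subseteq> range Inl"

definition M_shaped :: "'e set set \<Rightarrow> 'e set set \<Rightarrow> 'e set \<Rightarrow> bool" where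
  "M_shaped G1 G2 C \<longleftrightarrow> is_path_comp G1 G2 C \<and> even (card C)
     \<and> deg1_vertices G1 G2 C \<subseteq> range Inr"

definition N_shaped :: "'e set set \<Rightarrow> 'e set set \<Rightarrow> 'e set \<Rightarrow> bool" where
  "N_shaped G1 G2 C \<longleftrightarrow> is_path_comp G1 G2 C \<and> odd (card C)"

definition comp_size :: "'e set \<Rightarrow> nat" where
  "comp_size C = card C div 2"

definition trivial_crown :: "'e set set \<Rightarrow> 'e set set \<Rightarrow> 'e set \<Rightarrow> bool" where
  "trivial_crown G1 G2 C \<longleftrightarrow> is_crown G1 G2 C \<and> comp_size C = 1"

definition nontrivial_crown :: "'e set set \<Rightarrow> 'e set set \<Rightarrow> 'e set \<Rightarrow> bool" where
  "nontrivial_crown G1 G2 C \<longleftrightarrow> is_crown G1 G2 C \<and> comp_size C \<noteq> 1"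

definition trivial_comp :: "'e set set \<Rightarrow> 'e set set \<Rightarrow> 'e set \<Rightarrow> bool" where
  "trivial_comp G1 G2 C \<longleftrightarrow> (N_shaped G1 G2 C \<and> card C = 1) \<or> trivial_crown G1 G2 C"

definition d_comp :: "'e set set \<Rightarrow> 'e set set \<Rightarrow> 'e set \<Rightarrow> nat" where
  "d_comp G1 G2 B = comp_size B - (if trivial_crown G1 G2 B then 1 else 0)
                     + (if nontrivial_crown G1 G2 B then 1 else 0)"

text \<open>#ST({B}): sequences of d({B}) operations on G1 acting only on B (and the
components produced from it, i.e. only on extremities of B), after which every
component of the resulting adjacency graph lying in B is trivial.  For a single
component the "sort together" condition is vacuous.\<close>

definition nST_single :: "'e set set \<Rightarrow> 'e set set \<Rightarrow> 'e set \<Rightarrow> nat" where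
  "nST_single G1 G2 B = card {os. length os = d_comp G1 G2 B
      \<and> (\<forall>o1 \<in> set os. op_ext o1 \<subseteq> B)
      \<and> valid_seq G1 os
      \<and> (\<forall>C \<in> components (run_seq G1 os) G2. C \<subseteq> B \<longrightarrow> trivial_comp (run_seq G1 os) G2 C)}"

end

theory Submission
  imports Defs
begin

text \<open>Operations act only on extremities of B, so the vertices of G1 inside B evolve on their own, and
  B is sorted exactly when they coincide with the vertices of G2 inside B. Hence #ST({B}) counts
  the sequences of d({B}) operations turning one of these restrictions into the other, and
  numbering the extremities of B along the component relabels both as explicit genomes on an
  initial segment of the naturals. Every operation creates at most one adjacency, so while the
  number of remaining operations equals the number of target adjacencies still missing, each
  operation must create one of them. This leaves a single move at each step for an N-shaped path
  (extend its sorted prefix) and exactly two moves for a W-shaped window of size at least 2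
  (shorten it at either end), whence 2^(w-1). An M-shaped path or a crown has no telomere in G1,
  so the first move is one of its m resp. c cuts. For M, the cut number k leaves two W-shaped
  windows needing k and m-1-k steps, which may be interleaved in (m-1 choose k) ways; summing
  gives 2^(m-1). For a crown, a rotation turns what remains after any cut into a W-shaped path of
  size c, whence c * 2^(c-1).\<close>

definition ops_within :: "'e set \<Rightarrow> 'e scaj_op set" where
  "ops_within B = {p. op_ext p \<subseteq> B}"

definition scenarios :: "'e set set \<Rightarrow> 'e set \<Rightarrow> 'e set set \<Rightarrow> nat \<Rightarrow> 'e scaj_op list set" where
  "scenarios T B H k = {os. length os = k \<and> (\<forall>p\<in>set os. op_ext p \<subseteq> B) \<and> valid_seq H os \<and> run_seq H os = T}"

definition n_scenarios :: "'e set set \<Rightarrow> 'e set \<Rightarrow> 'e set set \<Rightarrow> nat \<Rightarrow> nat" where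
  "n_scenarios T B H k = card (scenarios T B H k)"

lemma finite_ops_within: "finite B \<Longrightarrow> finite (ops_within B)"
proof -
  assume fB: "finite B"
  have "ops_within B \<subseteq> Cut ` Pow B \<union> Join ` Pow B \<union> (\<lambda>(a,b,c). CutJoin a b c) ` (B \<times> B \<times> B)"
  proof
    fix p assume "p \<in> ops_within B"
    then show "p \<in> Cut ` Pow B \<union> Join ` Pow B \<union> (\<lambda>(a,b,c). CutJoin a b c) ` (B \<times> B \<times> B)"
      by (cases p) (auto simp: ops_within_def image_iff)
  qed
  moreover have "finite (Cut ` Pow B \<union> Join ` Pow B \<union> (\<lambda>(a,b,c). CutJoin a b c) ` (B \<times> B \<times> B))"
    using fB by auto
  ultimately show ?thesis using finite_subset by blast
qed

lemma run_seq_Nil[simp]: "run_seq H [] = H" by (simp add: run_seq_def)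

lemma run_seq_Cons[simp]: "run_seq H (p # os) = run_seq (op_apply H p) os" by (simp add: run_seq_def)

lemma finite_scenarios: "finite B \<Longrightarrow> finite (scenarios T B H k)"
proof -
  assume "finite B"
  then have "finite {xs. set xs \<subseteq> ops_within B \<and> length xs = k}"
    by (intro finite_lists_length_eq finite_ops_within)
  moreover have "scenarios T B H k \<subseteq> {xs. set xs \<subseteq> ops_within B \<and> length xs = k}"
    by (auto simp: scenarios_def ops_within_def)
  ultimately show ?thesis using finite_subset by blast
qed

lemma scenarios_0: "scenarios T B H 0 = (if H = T then {[]} else {})"
  by (auto simp: scenarios_def)

lemma n_scenarios_0: "n_scenarios T B H 0 = (if H = T then 1 else 0)"
  by (simp add: n_scenarios_def scenarios_0)

lemma scenarios_Suc: "scenarios T B H (Suc k) =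
   (\<Union>p \<in> {p \<in> ops_within B. op_valid H p}. (Cons p) ` scenarios T B (op_apply H p) k)"
proof (intro equalityI subsetI)
  fix os assume "os \<in> scenarios T B H (Suc k)"
  then obtain p os' where "os = p # os'" "length os' = k" "op_ext p \<subseteq> B" "op_valid H p"
     "\<forall>q\<in>set os'. op_ext q \<subseteq> B" "valid_seq (op_apply H p) os'" "run_seq (op_apply H p) os' = T"
    by (auto simp: scenarios_def length_Suc_conv)
  then show "os \<in> (\<Union>p \<in> {p \<in> ops_within B. op_valid H p}. (Cons p) ` scenarios T B (op_apply H p) k)"
    unfolding scenarios_def ops_within_def by fastforce
next
  fix os assume "os \<in> (\<Union>p \<in> {p \<in> ops_within B. op_valid H p}. (Cons p) ` scenarios T B (op_apply H p) k)"
  then show "os \<in> scenarios T B H (Suc k)"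
    unfolding scenarios_def ops_within_def by fastforce
qed

lemma n_scenarios_Suc: assumes "finite B"
  shows "n_scenarios T B H (Suc k) = (\<Sum>p \<in> {p \<in> ops_within B. op_valid H p}. n_scenarios T B (op_apply H p) k)"
proof -
  have "n_scenarios T B H (Suc k) = card (\<Union>p \<in> {p \<in> ops_within B. op_valid H p}. (Cons p) ` scenarios T B (op_apply H p) k)"
    by (simp add: n_scenarios_def scenarios_Suc)
  also have "\<dots> = (\<Sum>p \<in> {p \<in> ops_within B. op_valid H p}. card ((Cons p) ` scenarios T B (op_apply H p) k))"
  proof (rule card_UN_disjoint)
    show "finite {p \<in> ops_within B. op_valid H p}" using finite_ops_within[OF assms] by simp
    show "\<forall>i\<in>{p \<in> ops_within B. op_valid H p}. finite ((#) i ` scenarios T B (op_apply H i) k)"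
      using finite_scenarios[OF assms] by blast
    show "\<forall>i\<in>{p \<in> ops_within B. op_valid H p}. \<forall>j\<in>{p \<in> ops_within B. op_valid H p}. i \<noteq> j \<longrightarrow>
        (#) i ` scenarios T B (op_apply H i) k \<inter> (#) j ` scenarios T B (op_apply H j) k = {}" by blast
  qed
  also have "\<dots> = (\<Sum>p \<in> {p \<in> ops_within B. op_valid H p}. n_scenarios T B (op_apply H p) k)"
    by (simp add: n_scenarios_def card_image)
  finally show ?thesis .
qed

text \<open>An operation creates at most one adjacency, so the number of adjacencies of T missing
  from H bounds the length of every scenario from H to T; at that length only operations
  creating an adjacency of T can occur.\<close>

fun created :: "'e scaj_op \<Rightarrow> 'e set set" where
  "created (Cut s) = {}"
| "created (Join s) = {s}"
| "created (CutJoin a b c) = {{a, c}}"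

definition missing :: "'e set set \<Rightarrow> 'e set set \<Rightarrow> nat" where
  "missing T H = card {u \<in> T. card u = 2 \<and> u \<notin> H}"

lemma op_apply_subset: "op_apply H p \<subseteq> H \<union> created p \<union> {u. card u = 1}"
  by (cases p) auto

lemma missing_op_apply:
  assumes "finite T"
  shows "missing T H \<le> Suc (missing T (op_apply H p))"
    and "created p \<inter> T = {} \<Longrightarrow> missing T H \<le> missing T (op_apply H p)"
proof -
  let ?A = "{u \<in> T. card u = 2 \<and> u \<notin> H}"
  let ?A' = "{u \<in> T. card u = 2 \<and> u \<notin> op_apply H p}"
  have sub: "?A - created p \<subseteq> ?A'" using op_apply_subset[of H p] by auto
  have fin: "finite ?A'" using assms by simp
  have cc: "card (created p) \<le> 1" by (cases p) auto
  have fc: "finite (created p)" by (cases p) auto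
  have fA: "finite (?A - created p)" using assms by simp
  have "card ?A \<le> card ((?A - created p) \<union> created p)"
    by (rule card_mono) (use fA fc in auto)
  also have "\<dots> \<le> card (?A - created p) + card (created p)" by (rule card_Un_le)
  finally have "card ?A \<le> card (?A - created p) + card (created p)" .
  also have "\<dots> \<le> card ?A' + 1" using card_mono[OF fin sub] cc by simp
  finally show "missing T H \<le> Suc (missing T (op_apply H p))" by (simp add: missing_def)
  assume "created p \<inter> T = {}"
  then have "?A \<subseteq> ?A'" using sub by auto
  then show "missing T H \<le> missing T (op_apply H p)" unfolding missing_def using fin by (rule card_mono[rotated])
qed

lemma missing_le_length: "finite T \<Longrightarrow> os \<in> scenarios T B H k \<Longrightarrow> missing T H \<le> k"
proof (induction os arbitrary: H k)
  case Nil
  then have "H = T" "k = 0" by (auto simp: scenarios_def)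
  moreover have "missing T T = 0" unfolding missing_def by (metis (no_types, lifting) card.empty empty_Collect_eq)
  ultimately show ?case by simp
next
  case (Cons p os)
  then obtain k' where k: "k = Suc k'" and "os \<in> scenarios T B (op_apply H p) k'"
    by (auto simp: scenarios_def)
  then have "missing T (op_apply H p) \<le> k'" using Cons by blast
  then show ?case using missing_op_apply(1)[OF Cons.prems(1), of H p] k by simp
qed

lemma n_scenarios_eq_0_if_less_missing: "finite T \<Longrightarrow> k < missing T H \<Longrightarrow> n_scenarios T B H k = 0"
proof -
  assume a: "finite T" "k < missing T H"
  have "scenarios T B H k = {}" using missing_le_length[OF a(1)] a(2) by (meson equals0I leD)
  then show ?thesis by (simp add: n_scenarios_def)
qed

definition useful_ops :: "'e set set \<Rightarrow> 'e set \<Rightarrow> 'e set set \<Rightarrow> 'e scaj_op set" where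
  "useful_ops T B H = {p \<in> ops_within B. op_valid H p \<and> created p \<inter> T \<noteq> {}}"

lemma n_scenarios_Suc_useful:
  assumes "finite B" "finite T" "Suc k \<le> missing T H"
  shows "n_scenarios T B H (Suc k) = (\<Sum>p \<in> useful_ops T B H. n_scenarios T B (op_apply H p) k)"
proof -
  have "n_scenarios T B H (Suc k) = (\<Sum>p \<in> {p \<in> ops_within B. op_valid H p}. n_scenarios T B (op_apply H p) k)"
    by (rule n_scenarios_Suc[OF assms(1)])
  also have "\<dots> = (\<Sum>p \<in> useful_ops T B H. n_scenarios T B (op_apply H p) k)"
  proof (rule sum.mono_neutral_right)
    show "finite {p \<in> ops_within B. op_valid H p}" using finite_ops_within[OF assms(1)] by simp
    show "useful_ops T B H \<subseteq> {p \<in> ops_within B. op_valid H p}" by (auto simp: useful_ops_def)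
    show "\<forall>i\<in>{p \<in> ops_within B. op_valid H p} - useful_ops T B H. n_scenarios T B (op_apply H i) k = 0"
    proof
      fix p assume "p \<in> {p \<in> ops_within B. op_valid H p} - useful_ops T B H"
      then have "created p \<inter> T = {}" by (auto simp: useful_ops_def)
      then have "missing T H \<le> missing T (op_apply H p)" by (rule missing_op_apply(2)[OF assms(2)])
      then show "n_scenarios T B (op_apply H p) k = 0" using assms(3) by (intro n_scenarios_eq_0_if_less_missing[OF assms(2)]) simp
    qed
  qed
  finally show ?thesis .
qed

fun map_op :: "('a \<Rightarrow> 'b) \<Rightarrow> 'a scaj_op \<Rightarrow> 'b scaj_op" where
  "map_op f (Cut s) = Cut (f ` s)"
| "map_op f (Join s) = Join (f ` s)"
| "map_op f (CutJoin a b c) = CutJoin (f a) (f b) (f c)"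

definition map_vertices :: "('a \<Rightarrow> 'b) \<Rightarrow> 'a set set \<Rightarrow> 'b set set" where
  "map_vertices f H = (`) f ` H"

lemma op_ext_map_op: "op_ext (map_op f p) = f ` op_ext p"
  by (cases p) auto

lemma map_vertices_mem_iff:
  "inj_on f B \<Longrightarrow> H \<subseteq> Pow B \<Longrightarrow> u \<subseteq> B \<Longrightarrow> (f ` u \<in> map_vertices f H) = (u \<in> H)"
  unfolding map_vertices_def by (auto simp: inj_on_image_eq_iff)

lemma op_apply_Pow: "H \<subseteq> Pow B \<Longrightarrow> op_ext p \<subseteq> B \<Longrightarrow> op_apply H p \<subseteq> Pow B"
  by (cases p) auto

lemma inj_on_image_Pow: "inj_on f B \<Longrightarrow> inj_on ((`) f) (Pow B)"
  by (auto simp: inj_on_def inj_on_image_eq_iff)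

lemma map_vertices_diff: "inj_on f B \<Longrightarrow> X \<subseteq> Pow B \<Longrightarrow> Y \<subseteq> Pow B \<Longrightarrow>
    map_vertices f (X - Y) = map_vertices f X - map_vertices f Y"
  unfolding map_vertices_def by (rule inj_on_image_set_diff[OF inj_on_image_Pow]) auto

lemma map_vertices_Un: "map_vertices f (X \<union> Y) = map_vertices f X \<union> map_vertices f Y" by (auto simp: map_vertices_def)

lemma map_vertices_insert: "map_vertices f (insert u X) = insert (f ` u) (map_vertices f X)" by (simp add: map_vertices_def)

lemma op_valid_map_op:
  assumes inj: "inj_on f B" and HB: "H \<subseteq> Pow B" and pB: "op_ext p \<subseteq> B" and v: "op_valid H p"
  shows "op_valid (map_vertices f H) (map_op f p)"
proof -
  have sing: "\<And>x. x \<in> B \<Longrightarrow> ({f x} \<in> map_vertices f H) = ({x} \<in> H)"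
    using map_vertices_mem_iff[OF inj HB, of "{_}"] by auto
  have cardi: "\<And>s. s \<subseteq> B \<Longrightarrow> card (f ` s) = card s"
    using inj by (meson card_image inj_on_subset)
  show ?thesis
  proof (cases p)
    case (Cut s)
    then show ?thesis using v pB cardi map_vertices_mem_iff[OF inj HB] by auto
  next
    case (Join s)
    then show ?thesis using v pB cardi sing by auto
  next
    case (CutJoin a b c)
    have "f a \<noteq> f b" using v pB inj CutJoin by (auto simp: inj_on_def)
    moreover have "{f a, f b} \<in> map_vertices f H" using map_vertices_mem_iff[OF inj HB, of "{a,b}"] v pB CutJoin by auto
    moreover have "{f c} \<in> map_vertices f H" using sing[of c] v pB CutJoin by auto
    ultimately show ?thesis using CutJoin by simp
  qed
qed

lemma op_apply_map_op:
  assumes inj: "inj_on f B" and HB: "H \<subseteq> Pow B" and pB: "op_ext p \<subseteq> B"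
  shows "op_apply (map_vertices f H) (map_op f p) = map_vertices f (op_apply H p)"
proof (cases p)
  case (Cut s)
  have e1: "map_vertices f {{x} |x. x \<in> s} = {{x} |x. x \<in> f ` s}" by (auto simp: map_vertices_def)
  have "map_vertices f (H - {s}) = map_vertices f H - map_vertices f {s}"
    by (rule map_vertices_diff[OF inj HB]) (use pB Cut in auto)
  then show ?thesis using Cut by (simp add: map_vertices_Un e1) (simp add: map_vertices_def)
next
  case (Join s)
  have e1: "map_vertices f {{x} |x. x \<in> s} = {{x} |x. x \<in> f ` s}" by (auto simp: map_vertices_def)
  have "map_vertices f (H - {{x} |x. x \<in> s}) = map_vertices f H - map_vertices f {{x} |x. x \<in> s}"
    by (rule map_vertices_diff[OF inj HB]) (use pB Join in auto)
  then show ?thesis using Join by (simp add: map_vertices_Un e1) (simp add: map_vertices_def)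
next
  case (CutJoin a b c)
  have "map_vertices f (H - {{a, b}, {c}}) = map_vertices f H - map_vertices f {{a, b}, {c}}"
    by (rule map_vertices_diff[OF inj HB]) (use pB CutJoin in auto)
  then show ?thesis using CutJoin by (simp add: map_vertices_Un) (simp add: map_vertices_def)
qed

lemma map_op_run_seq:
  assumes inj: "inj_on f B"
  shows "H \<subseteq> Pow B \<Longrightarrow> \<forall>p\<in>set os. op_ext p \<subseteq> B \<Longrightarrow> valid_seq H os \<Longrightarrow>
     valid_seq (map_vertices f H) (map (map_op f) os) \<and> run_seq (map_vertices f H) (map (map_op f) os) = map_vertices f (run_seq H os)"
proof (induction os arbitrary: H)
  case Nil then show ?case by simp
next
  case (Cons p os)
  have v: "op_valid H p" and pB: "op_ext p \<subseteq> B" using Cons.prems by auto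
  have "op_apply H p \<subseteq> Pow B" using op_apply_Pow[OF Cons.prems(1) pB] .
  then have IH: "valid_seq (map_vertices f (op_apply H p)) (map (map_op f) os) \<and>
     run_seq (map_vertices f (op_apply H p)) (map (map_op f) os) = map_vertices f (run_seq (op_apply H p) os)"
    using Cons by auto
  show ?case using op_valid_map_op[OF inj Cons.prems(1) pB v] op_apply_map_op[OF inj Cons.prems(1) pB] IH by simp
qed

lemma inj_on_map_op: assumes "inj_on f B" shows "inj_on (map_op f) (ops_within B)"
proof (rule inj_onI)
  fix p q assume p: "p \<in> ops_within B" and q: "q \<in> ops_within B" and e: "map_op f p = map_op f q"
  show "p = q"
  proof (cases p)
    case (Cut s)
    then obtain s' where "q = Cut s'" using e by (cases q) auto
    then show ?thesis using Cut e p q assms by (auto simp: ops_within_def inj_on_image_eq_iff)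
  next
    case (Join s)
    then obtain s' where "q = Join s'" using e by (cases q) auto
    then show ?thesis using Join e p q assms by (auto simp: ops_within_def inj_on_image_eq_iff)
  next
    case (CutJoin a b c)
    then obtain a' b' c' where "q = CutJoin a' b' c'" using e by (cases q) auto
    then show ?thesis using CutJoin e p q assms by (auto simp: ops_within_def inj_on_def)
  qed
qed

lemma n_scenarios_le_map:
  assumes inj: "inj_on f B" and fin: "finite B" and HB: "H \<subseteq> Pow B"
  shows "n_scenarios T B H k \<le> n_scenarios (map_vertices f T) (f ` B) (map_vertices f H) k"
  unfolding n_scenarios_def
proof (rule card_inj_on_le)
  show "finite (scenarios (map_vertices f T) (f ` B) (map_vertices f H) k)" using fin by (simp add: finite_scenarios)
  show "map (map_op f) ` scenarios T B H k \<subseteq> scenarios (map_vertices f T) (f ` B) (map_vertices f H) k"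
  proof
    fix os' assume "os' \<in> map (map_op f) ` scenarios T B H k"
    then obtain os where os: "os' = map (map_op f) os" "os \<in> scenarios T B H k" by auto
    then have a: "\<forall>p\<in>set os. op_ext p \<subseteq> B" "valid_seq H os" "run_seq H os = T" "length os = k"
      by (auto simp: scenarios_def)
    from map_op_run_seq[OF inj HB a(1,2)] a os(1) show "os' \<in> scenarios (map_vertices f T) (f ` B) (map_vertices f H) k"
      by (auto simp: scenarios_def op_ext_map_op)
  qed
  show "inj_on (map (map_op f)) (scenarios T B H k)"
  proof (rule inj_onI)
    fix xs ys assume xs: "xs \<in> scenarios T B H k" and ys: "ys \<in> scenarios T B H k" and e: "map (map_op f) xs = map (map_op f) ys"
    have l: "length xs = length ys" using e by (metis length_map)
    show "xs = ys"
    proof (rule nth_equalityI[OF l])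
      fix i assume i: "i < length xs"
      have "xs ! i \<in> ops_within B" "ys ! i \<in> ops_within B" using xs ys i l by (auto simp: scenarios_def ops_within_def)
      moreover have "map_op f (xs ! i) = map_op f (ys ! i)" using e i l by (metis nth_map)
      ultimately show "xs ! i = ys ! i" using inj_on_map_op[OF inj] by (auto simp: inj_on_def)
    qed
  qed
qed

lemma n_scenarios_map:
  assumes inj: "inj_on f B" and fin: "finite B" and HB: "H \<subseteq> Pow B" and TB: "T \<subseteq> Pow B"
  shows "n_scenarios (map_vertices f T) (f ` B) (map_vertices f H) k = n_scenarios T B H k"
proof (rule antisym)
  show "n_scenarios T B H k \<le> n_scenarios (map_vertices f T) (f ` B) (map_vertices f H) k" by (rule n_scenarios_le_map[OF inj fin HB])
  let ?g = "inv_into B f"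
  have ig: "inj_on ?g (f ` B)" by (rule inj_on_inv_into) simp
  have gB: "?g ` f ` B = B" using inj by (simp add: image_inv_into_cancel)
  have bk: "\<And>X. X \<subseteq> Pow B \<Longrightarrow> map_vertices ?g (map_vertices f X) = X"
  proof -
    fix X :: "'a set set" assume X: "X \<subseteq> Pow B"
    have "\<And>u. u \<subseteq> B \<Longrightarrow> ?g ` f ` u = u" using inj by (simp add: image_inv_into_cancel)
    then have "map_vertices ?g (map_vertices f X) = (\<lambda>u. u) ` X" unfolding map_vertices_def image_image using X
      by (intro image_cong) auto
    then show "map_vertices ?g (map_vertices f X) = X" by simp
  qed
  have HB': "map_vertices f H \<subseteq> Pow (f ` B)" using HB by (auto simp: map_vertices_def)
  have "n_scenarios (map_vertices f T) (f ` B) (map_vertices f H) k \<le> n_scenarios (map_vertices ?g (map_vertices f T)) (?g ` f ` B) (map_vertices ?g (map_vertices f H)) k"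
    by (rule n_scenarios_le_map[OF ig _ HB']) (use fin in simp)
  then show "n_scenarios (map_vertices f T) (f ` B) (map_vertices f H) k \<le> n_scenarios T B H k"
    using bk[OF HB] bk[OF TB] gB by simp
qed

text \<open>After numbering the extremities of a component along it, both genomes are of the form
  ngenome P Q: adjacencies {i, i+1} for P i and telomeres {i} for Q i.\<close>

definition npair :: "nat \<Rightarrow> nat set" where "npair i = {i, Suc i}"

definition ngenome :: "(nat \<Rightarrow> bool) \<Rightarrow> (nat \<Rightarrow> bool) \<Rightarrow> nat set set" where
  "ngenome P Q = {npair i | i. P i} \<union> {{i} | i. Q i}"

lemma doubleton_eq_npair: "({x, y} = npair i) = ((x = i \<and> y = Suc i) \<or> (x = Suc i \<and> y = i))"
  by (auto simp: npair_def doubleton_eq_iff)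

lemma npair_inject[simp]: "(npair i = npair j) = (i = j)"
  by (auto simp: npair_def doubleton_eq_iff)

lemma singleton_ne_npair[simp]: "{x} \<noteq> npair i" "npair i \<noteq> {x}"
  by (auto simp: npair_def)

lemma card_npair[simp]: "card (npair i) = 2" by (simp add: npair_def)

lemma singleton_in_ngenome: "({c} \<in> ngenome P Q) = Q c"
  by (auto simp: ngenome_def)

lemma npair_in_ngenome: "(npair j \<in> ngenome P Q) = P j"
  by (auto simp: ngenome_def)

lemma doubleton_in_ngenome: "x \<noteq> y \<Longrightarrow> ({x, y} \<in> ngenome P Q) = (\<exists>j. P j \<and> {x, y} = npair j)"
  by (auto simp: ngenome_def doubleton_eq_iff)

lemma ngenome_cong: "(\<And>i. P i = P' i) \<Longrightarrow> (\<And>i. Q i = Q' i) \<Longrightarrow> ngenome P Q = ngenome P' Q'"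
proof -
  assume "\<And>i. P i = P' i" "\<And>i. Q i = Q' i"
  then have "P = P'" "Q = Q'" by auto
  then show ?thesis by simp
qed

lemma ngenome_Pow: "(\<And>i. P i \<Longrightarrow> Suc i < L) \<Longrightarrow> (\<And>i. Q i \<Longrightarrow> i < L) \<Longrightarrow> ngenome P Q \<subseteq> Pow {..<L}"
  unfolding ngenome_def npair_def by (force dest: Suc_lessD)

lemma ngenome_minus_npair: "ngenome P Q - {npair j} = ngenome (P(j := False)) Q"
  unfolding ngenome_def by auto

lemma ngenome_minus_singleton: "ngenome P Q - {{c}} = ngenome P (Q(c := False))"
  unfolding ngenome_def by auto

lemma ngenome_insert_npair: "insert (npair j) (ngenome P Q) = ngenome (P(j := True)) Q"
  unfolding ngenome_def by auto

lemma ngenome_insert_singleton: "insert {c} (ngenome P Q) = ngenome P (Q(c := True))"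
  unfolding ngenome_def by auto

lemma op_apply_ngenome_Cut: "op_apply (ngenome P Q) (Cut (npair j)) = ngenome (P(j := False)) (Q(j := True, Suc j := True))"
proof -
  have "{{x} |x. x \<in> npair j} = {{j}, {Suc j}}" by (auto simp: npair_def)
  then have "op_apply (ngenome P Q) (Cut (npair j)) = insert {Suc j} (insert {j} (ngenome P Q - {npair j}))" by auto
  then show ?thesis by (simp only: ngenome_minus_npair ngenome_insert_singleton)
qed

lemma op_apply_ngenome_Join: "op_apply (ngenome P Q) (Join (npair k)) = ngenome (P(k := True)) (Q(k := False, Suc k := False))"
proof -
  have "{{x} |x. x \<in> npair k} = {{k}, {Suc k}}" by (auto simp: npair_def)
  then have "op_apply (ngenome P Q) (Join (npair k)) = insert (npair k) ((ngenome P Q - {{k}}) - {{Suc k}})" by auto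
  then show ?thesis by (simp only: ngenome_minus_singleton ngenome_insert_npair)
qed

lemma op_apply_ngenome_CutJoin: assumes "x \<noteq> y" "{x, y} = npair j" "{x, c} = npair k"
  shows "op_apply (ngenome P Q) (CutJoin x y c) = ngenome (P(j := False, k := True)) (Q(c := False, y := True))"
proof -
  have "op_apply (ngenome P Q) (CutJoin x y c) = insert {y} (insert (npair k) ((ngenome P Q - {npair j}) - {{c}}))"
    using assms by auto
  then show ?thesis by (simp only: ngenome_minus_singleton ngenome_insert_npair ngenome_minus_npair ngenome_insert_singleton)
qed

lemma useful_ops_ngenomeE:
  assumes "p \<in> useful_ops (ngenome P2 Q2) B (ngenome P Q)"
  shows "(\<exists>i. p = Join (npair i) \<and> P2 i \<and> Q i \<and> Q (Suc i)) \<or>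
    (\<exists>x y c j. p = CutJoin x y c \<and> x \<noteq> y \<and> P j \<and> {x, y} = npair j \<and> Q c \<and>
       (x = c \<and> Q2 x \<or> x \<noteq> c \<and> (\<exists>i. P2 i \<and> {x, c} = npair i)))"
proof (cases p)
  case (Cut s) then show ?thesis using assms by (simp add: useful_ops_def)
next
  case (Join s)
  then have v: "card s = 2" "\<forall>x\<in>s. {x} \<in> ngenome P Q" "s \<in> ngenome P2 Q2"
    using assms by (auto simp: useful_ops_def)
  then obtain i where "P2 i" "s = npair i" by (auto simp: ngenome_def)
  then show ?thesis using Join v(2) by (auto simp: npair_def singleton_in_ngenome)
next
  case (CutJoin x y c)
  then have v: "x \<noteq> y" "{x, y} \<in> ngenome P Q" "{c} \<in> ngenome P Q" "{x, c} \<in> ngenome P2 Q2"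
    using assms by (auto simp: useful_ops_def)
  then obtain j where j: "P j" "{x, y} = npair j" using doubleton_in_ngenome by blast
  show ?thesis
  proof (cases "x = c")
    case True
    then show ?thesis using CutJoin v j by (auto simp: singleton_in_ngenome)
  next
    case False
    then obtain i where "P2 i" "{x, c} = npair i" using v(4) doubleton_in_ngenome by blast
    then show ?thesis using CutJoin v j False by (auto simp: singleton_in_ngenome)
  qed
qed

lemma Join_in_useful_ops: "npair i \<subseteq> B \<Longrightarrow> P2 i \<Longrightarrow> Q i \<Longrightarrow> Q (Suc i) \<Longrightarrow>
    Join (npair i) \<in> useful_ops (ngenome P2 Q2) B (ngenome P Q)"
proof -
  assume a: "npair i \<subseteq> B" "P2 i" "Q i" "Q (Suc i)"
  have "\<forall>x\<in>npair i. {x} \<in> ngenome P Q" using a by (auto simp: npair_def singleton_in_ngenome)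
  moreover have "npair i \<in> ngenome P2 Q2" using a by (simp add: npair_in_ngenome)
  ultimately show ?thesis using a by (auto simp: useful_ops_def ops_within_def)
qed

lemma CutJoin_in_useful_ops: "{x, y, c} \<subseteq> B \<Longrightarrow> x \<noteq> y \<Longrightarrow> P j \<Longrightarrow> {x, y} = npair j \<Longrightarrow> Q c \<Longrightarrow>
    P2 i \<Longrightarrow> {x, c} = npair i \<Longrightarrow>
   CutJoin x y c \<in> useful_ops (ngenome P2 Q2) B (ngenome P Q)"
  by (auto simp: useful_ops_def ops_within_def singleton_in_ngenome npair_in_ngenome)

lemma missing_ngenome_ge:
  assumes "finite {i. P2 i}"
  shows "card {i. P2 i \<and> \<not> P i} \<le> missing (ngenome P2 Q2) (ngenome P Q)"
proof -
  have "npair ` {i. P2 i \<and> \<not> P i} \<subseteq> {u \<in> ngenome P2 Q2. card u = 2 \<and> u \<notin> ngenome P Q}"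
  proof
    fix u assume "u \<in> npair ` {i. P2 i \<and> \<not> P i}"
    then obtain i where "u = npair i" "P2 i" "\<not> P i" by blast
    then show "u \<in> {u \<in> ngenome P2 Q2. card u = 2 \<and> u \<notin> ngenome P Q}" by (simp add: npair_in_ngenome)
  qed
  moreover have "finite {u \<in> ngenome P2 Q2. card u = 2 \<and> u \<notin> ngenome P Q}"
  proof -
    have "{u \<in> ngenome P2 Q2. card u = 2 \<and> u \<notin> ngenome P Q} \<subseteq> npair ` {i. P2 i}" by (auto simp: ngenome_def)
    then show ?thesis using assms finite_subset by blast
  qed
  ultimately have "card (npair ` {i. P2 i \<and> \<not> P i}) \<le> missing (ngenome P2 Q2) (ngenome P Q)"
    unfolding missing_def by (rule card_mono[rotated])
  moreover have "inj_on npair {i. P2 i \<and> \<not> P i}" by (auto simp: inj_on_def)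
  ultimately show ?thesis by (simp add: card_image)
qed

lemma map_vertices_ngenome:
  assumes "\<And>j. P j \<Longrightarrow> f (Suc j) = Suc (f j)"
    "\<And>i. P' i = (\<exists>j. P j \<and> i = f j)" "\<And>i. Q' i = (\<exists>j. Q j \<and> i = f j)"
  shows "map_vertices f (ngenome P Q) = ngenome P' Q'"
proof -
  have "map_vertices f (ngenome P Q) = {f ` npair j | j. P j} \<union> {{f i} | i. Q i}"
    unfolding map_vertices_def ngenome_def by auto
  also have "{f ` npair j | j. P j} = {npair (f j) | j. P j}"
    using assms(1) by (auto simp: npair_def)
  finally show ?thesis unfolding ngenome_def using assms(2,3) by auto
qed

section \<open>W-shaped paths\<close>

text \<open>Extremities 0, ..., 2w-1 of a W-shaped path of size w, numbered from a telomere of G1: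
  W_target w is G2, and W_state w a b is G1 with everything outside the window [2a, 2b) already
  sorted, the window itself being a W-shaped path of size b - a.\<close>

definition W_target_adj :: "nat \<Rightarrow> nat \<Rightarrow> bool" where "W_target_adj w i = (even i \<and> i < 2*w)"

definition W_state_adj :: "nat \<Rightarrow> nat \<Rightarrow> nat \<Rightarrow> nat \<Rightarrow> bool" where
  "W_state_adj w a b i = ((even i \<and> (i < 2*a \<or> 2*b \<le> i) \<and> i < 2*w) \<or> (odd i \<and> 2*a < i \<and> i + 2 < 2*b))"

definition W_state_tel :: "nat \<Rightarrow> nat \<Rightarrow> nat \<Rightarrow> bool" where "W_state_tel a b i = (i = 2*a \<or> i + 1 = 2*b)"

abbreviation W_target where "W_target w \<equiv> ngenome (W_target_adj w) (\<lambda>_. False)"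

abbreviation W_state where "W_state w a b \<equiv> ngenome (W_state_adj w a b) (W_state_tel a b)"

lemma W_target_Pow: "W_target w \<subseteq> Pow {..<2*w}"
  by (rule ngenome_Pow) (auto simp: W_target_adj_def elim!: evenE)

lemma W_state_Pow: "W_state w a b \<subseteq> Pow {..<2*w}" if "b \<le> w" "a < b"
  using that by (intro ngenome_Pow) (auto simp: W_state_adj_def W_state_tel_def)

lemma finite_W_target: "finite (W_target w)" using W_target_Pow by (meson finite_Pow_iff finite_lessThan finite_subset)

lemma missing_W_state:
  assumes "a \<le> b" "b \<le> w"
  shows "b - a \<le> missing (W_target w) (W_state w a b)"
proof -
  have "(\<lambda>i. 2*i) ` {a..<b} \<subseteq> {i. W_target_adj w i \<and> \<not> W_state_adj w a b i}"
    using assms by (auto simp: W_target_adj_def W_state_adj_def)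
  then have "card ((\<lambda>i. 2*i) ` {a..<b}) \<le> card {i. W_target_adj w i \<and> \<not> W_state_adj w a b i}"
    by (rule card_mono[rotated]) (auto simp: W_target_adj_def)
  moreover have "card ((\<lambda>i. 2*i) ` {a..<b}) = b - a" by (simp add: card_image inj_on_def)
  moreover have "card {i. W_target_adj w i \<and> \<not> W_state_adj w a b i} \<le> missing (W_target w) (W_state w a b)"
    by (rule missing_ngenome_ge) (auto simp: W_target_adj_def)
  ultimately show ?thesis by simp
qed

lemma useful_ops_W_state_1:
  assumes "Suc a \<le> w"
  shows "useful_ops (W_target w) {..<2*w} (W_state w a (Suc a)) = {Join (npair (2*a))}"
proof (intro equalityI subsetI)
  fix p assume "p \<in> useful_ops (W_target w) {..<2*w} (W_state w a (Suc a))"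
  from useful_ops_ngenomeE[OF this] show "p \<in> {Join (npair (2*a))}"
  proof (elim disjE exE conjE)
    fix i assume a: "p = Join (npair i)" "W_target_adj w i" "W_state_tel a (Suc a) i" "W_state_tel a (Suc a) (Suc i)"
    have "i = 2*a"
      by (insert a(2-4)[unfolded W_target_adj_def W_state_tel_def], (elim disjE conjE evenE oddE; arith))
    then show ?thesis using a by simp
  next
    fix x y c j i assume "x \<noteq> y" "W_state_adj w a (Suc a) j" "{x, y} = npair j" "W_state_tel a (Suc a) c"
      "x \<noteq> c" "W_target_adj w i" "{x, c} = npair i"
    note h = this[unfolded W_target_adj_def W_state_tel_def W_state_adj_def doubleton_eq_npair]
    have False by (insert h, (elim disjE conjE evenE oddE; arith))
    then show ?thesis ..
  qed simp
next
  fix p assume "p \<in> {Join (npair (2*a))}"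
  moreover have "Join (npair (2*a)) \<in> useful_ops (W_target w) {..<2*w} (W_state w a (Suc a))"
    by (rule Join_in_useful_ops) (use assms in \<open>auto simp: W_target_adj_def W_state_tel_def npair_def\<close>)
  ultimately show "p \<in> useful_ops (W_target w) {..<2*w} (W_state w a (Suc a))" by simp
qed

lemma n_scenarios_W_state_1:
  assumes "Suc a \<le> w"
  shows "n_scenarios (W_target w) {..<2*w} (W_state w a (Suc a)) 1 = 1"
proof -
  let ?H = "W_state w a (Suc a)"
  have sorted: "op_apply ?H (Join (npair (2*a))) = W_target w"
    unfolding op_apply_ngenome_Join
    by (rule ngenome_cong) (use assms in \<open>auto simp: W_target_adj_def W_state_adj_def W_state_tel_def\<close>)
  have "n_scenarios (W_target w) {..<2*w} ?H (Suc 0)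
      = (\<Sum>p\<in>useful_ops (W_target w) {..<2*w} ?H. n_scenarios (W_target w) {..<2*w} (op_apply ?H p) 0)"
    by (rule n_scenarios_Suc_useful) (use missing_W_state[of a "Suc a" w] assms finite_W_target in auto)
  also have "\<dots> = 1"
    by (simp add: useful_ops_W_state_1[OF assms] sorted n_scenarios_0 del: op_apply.simps)
  finally show ?thesis by simp
qed

lemma useful_ops_W_state:
  assumes b: "b = a + Suc (Suc m)" and bw: "b \<le> w"
  shows "useful_ops (W_target w) {..<2*w} (W_state w a b)
       = {CutJoin (2*a+1) (2*a+2) (2*a), CutJoin (2*a+2*m+2) (2*a+2*m+1) (2*a+2*m+3)}"
proof (intro equalityI subsetI)
  fix p assume "p \<in> useful_ops (W_target w) {..<2*w} (W_state w a b)"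
  from useful_ops_ngenomeE[OF this]
  show "p \<in> {CutJoin (2*a+1) (2*a+2) (2*a), CutJoin (2*a+2*m+2) (2*a+2*m+1) (2*a+2*m+3)}"
  proof (elim disjE exE conjE)
    fix i assume "W_target_adj w i" "W_state_tel a b i" "W_state_tel a b (Suc i)"
    note h = this[unfolded W_target_adj_def W_state_tel_def]
    have False by (insert h b, (elim disjE conjE evenE oddE; arith))
    then show ?thesis ..
  next
    fix x y c j i assume pc: "p = CutJoin x y c" and "x \<noteq> y" "W_state_adj w a b j" "{x, y} = npair j"
      "W_state_tel a b c" "x \<noteq> c" "W_target_adj w i" "{x, c} = npair i"
    note h = this[unfolded W_target_adj_def W_state_tel_def W_state_adj_def doubleton_eq_npair]
    have "(x = 2*a+1 \<and> y = 2*a+2 \<and> c = 2*a) \<or> (x = 2*a+2*m+2 \<and> y = 2*a+2*m+1 \<and> c = 2*a+2*m+3)"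
    proof (cases "c = 2*a")
      case True
      have x: "x = 2*a+1" by (insert h(6,7,8) True, (elim disjE conjE evenE oddE; arith))
      have "y = 2*a+2" by (insert h(2,3,4) x True b, (elim disjE conjE evenE oddE; arith))
      then show ?thesis using x True by simp
    next
      case False
      then have c: "c = 2*a+2*m+3" using h(5) b by arith
      have x: "x = 2*a+2*m+2" by (insert h(6,7,8) c, (elim disjE conjE evenE oddE; arith))
      have "y = 2*a+2*m+1" by (insert h(2,3,4) x c b, (elim disjE conjE evenE oddE; arith))
      then show ?thesis using x c by simp
    qed
    then show ?thesis using pc by auto
  qed simp
next
  fix p assume "p \<in> {CutJoin (2*a+1) (2*a+2) (2*a), CutJoin (2*a+2*m+2) (2*a+2*m+1) (2*a+2*m+3)}"
  moreover have "CutJoin (2*a+1) (2*a+2) (2*a) \<in> useful_ops (W_target w) {..<2*w} (W_state w a b)"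
    using b bw by (intro CutJoin_in_useful_ops[where j="2*a+1" and i="2*a"])
      (auto simp: W_target_adj_def W_state_adj_def W_state_tel_def npair_def)
  moreover have "CutJoin (2*a+2*m+2) (2*a+2*m+1) (2*a+2*m+3) \<in> useful_ops (W_target w) {..<2*w} (W_state w a b)"
    using b bw by (intro CutJoin_in_useful_ops[where j="2*a+2*m+1" and i="2*a+2*m+2"])
      (auto simp: W_target_adj_def W_state_adj_def W_state_tel_def npair_def)
  ultimately show "p \<in> useful_ops (W_target w) {..<2*w} (W_state w a b)" by blast
qed

lemma op_apply_W_state_left:
  assumes "b = a + Suc (Suc m)" "b \<le> w"
  shows "op_apply (W_state w a b) (CutJoin (2*a+1) (2*a+2) (2*a)) = W_state w (Suc a) b"
  using assms by (subst op_apply_ngenome_CutJoin[where j="2*a+1" and k="2*a"])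
    (auto simp: npair_def intro!: ngenome_cong simp: W_state_adj_def W_state_tel_def fun_upd_def
      elim!: evenE oddE, ((arith)+)?)

lemma op_apply_W_state_right:
  assumes "b = a + Suc (Suc m)" "b \<le> w"
  shows "op_apply (W_state w a b) (CutJoin (2*a+2*m+2) (2*a+2*m+1) (2*a+2*m+3)) = W_state w a (a + Suc m)"
  using assms by (subst op_apply_ngenome_CutJoin[where j="2*a+2*m+1" and k="2*a+2*m+2"])
    (auto simp: npair_def intro!: ngenome_cong simp: W_state_adj_def W_state_tel_def fun_upd_def
      elim!: evenE oddE, ((arith)+)?)

lemma n_scenarios_W_state:
  assumes "b = a + Suc n" "b \<le> w"
  shows "n_scenarios (W_target w) {..<2*w} (W_state w a b) (Suc n) = 2 ^ n"
  using assms
proof (induction n arbitrary: b a)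
  case 0
  then show ?case using n_scenarios_W_state_1 by simp
next
  case (Suc m b a)
  let ?N = "\<lambda>H. n_scenarios (W_target w) {..<2*w} H (Suc m)"
  let ?H = "W_state w a b"
  let ?left = "CutJoin (2*a+1) (2*a+2) (2*a)"
  let ?right = "CutJoin (2*a+2*m+2) (2*a+2*m+1) (2*a+2*m+3)"
  have "n_scenarios (W_target w) {..<2*w} ?H (Suc (Suc m)) = (\<Sum>p\<in>{?left, ?right}. ?N (op_apply ?H p))"
    using n_scenarios_Suc_useful[of "{..<2*w}" "W_target w" "Suc m" ?H] missing_W_state[of a b w]
      useful_ops_W_state[OF Suc.prems] finite_W_target Suc.prems by (simp del: op_apply.simps)
  also have "\<dots> = ?N (W_state w (Suc a) b) + ?N (W_state w a (a + Suc m))"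
    by (simp only: op_apply_W_state_left[OF Suc.prems] op_apply_W_state_right[OF Suc.prems]
        sum.insert_if finite.emptyI finite.insertI empty_iff insert_iff sum.empty) simp
  also have "\<dots> = 2 ^ m + 2 ^ m" using Suc.IH[of b "Suc a"] Suc.IH[of "a + Suc m" a] Suc.prems by simp
  finally show ?case by simp
qed

lemma n_scenarios_W: "w = Suc w' \<Longrightarrow> n_scenarios (W_target w) {..<2*w} (W_state w 0 w) w = 2 ^ w'"
  using n_scenarios_W_state[of w 0 w' w] by simp

section \<open>N-shaped paths\<close>

text \<open>Extremities 0, ..., 2n of an N-shaped path numbered from its telomere in G1: in
  N_state n a the first a adjacencies of N_target n are already present.\<close>

definition N_target_adj :: "nat \<Rightarrow> nat \<Rightarrow> bool" where "N_target_adj n i = (even i \<and> i < 2*n)"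

definition N_target_tel :: "nat \<Rightarrow> nat \<Rightarrow> bool" where "N_target_tel n i = (i = 2*n)"

definition N_state_adj :: "nat \<Rightarrow> nat \<Rightarrow> nat \<Rightarrow> bool" where
  "N_state_adj n a i = ((even i \<and> i < 2*a) \<or> (odd i \<and> 2*a < i \<and> i < 2*n))"

definition N_state_tel :: "nat \<Rightarrow> nat \<Rightarrow> bool" where "N_state_tel a i = (i = 2*a)"

abbreviation N_target where "N_target n \<equiv> ngenome (N_target_adj n) (N_target_tel n)"

abbreviation N_state where "N_state n a \<equiv> ngenome (N_state_adj n a) (N_state_tel a)"

lemma N_target_Pow: "N_target n \<subseteq> Pow {..<2*n+1}"
  by (rule ngenome_Pow) (auto simp: N_target_adj_def N_target_tel_def elim!: evenE)

lemma finite_N_target: "finite (N_target n)" using N_target_Pow by (meson finite_Pow_iff finite_lessThan finite_subset)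

lemma missing_N_state:
  assumes "a \<le> n"
  shows "n - a \<le> missing (N_target n) (N_state n a)"
proof -
  have "(\<lambda>i. 2*i) ` {a..<n} \<subseteq> {i. N_target_adj n i \<and> \<not> N_state_adj n a i}"
    by (auto simp: N_target_adj_def N_state_adj_def)
  then have "card ((\<lambda>i. 2*i) ` {a..<n}) \<le> card {i. N_target_adj n i \<and> \<not> N_state_adj n a i}"
    by (rule card_mono[rotated]) (auto simp: N_target_adj_def)
  moreover have "card ((\<lambda>i. 2*i) ` {a..<n}) = n - a" by (simp add: card_image inj_on_def)
  moreover have "card {i. N_target_adj n i \<and> \<not> N_state_adj n a i} \<le> missing (N_target n) (N_state n a)"
    by (rule missing_ngenome_ge) (auto simp: N_target_adj_def)
  ultimately show ?thesis by simp
qed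

lemma useful_ops_N_state:
  assumes "a < n"
  shows "useful_ops (N_target n) {..<2*n+1} (N_state n a) = {CutJoin (2*a+1) (2*a+2) (2*a)}"
proof (intro equalityI subsetI)
  fix p assume "p \<in> useful_ops (N_target n) {..<2*n+1} (N_state n a)"
  from useful_ops_ngenomeE[OF this] show "p \<in> {CutJoin (2*a+1) (2*a+2) (2*a)}"
  proof (elim disjE exE conjE)
    fix i assume "N_target_adj n i" "N_state_tel a i" "N_state_tel a (Suc i)"
    then have False unfolding N_state_tel_def by simp
    then show ?thesis ..
  next
    fix x y c j assume "N_state_tel a c" "x = c" "N_target_tel n x"
    then have False using assms unfolding N_state_tel_def N_target_tel_def by simp
    then show ?thesis ..
  next
    fix x y c j i assume pc: "p = CutJoin x y c" and "x \<noteq> y" "N_state_adj n a j" "{x, y} = npair j"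
      "N_state_tel a c" "x \<noteq> c" "N_target_adj n i" "{x, c} = npair i"
    note h = this[unfolded N_target_adj_def N_state_tel_def N_state_adj_def doubleton_eq_npair]
    have c: "c = 2*a" using h(5) .
    have x: "x = 2*a+1" by (insert h(6,7,8) c, (elim disjE conjE evenE oddE; arith))
    have "y = 2*a+2" by (insert h(2,3,4) x c, (elim disjE conjE evenE oddE; arith))
    then show ?thesis using x c pc by simp
  qed
next
  fix p assume "p \<in> {CutJoin (2*a+1) (2*a+2) (2*a)}"
  moreover have "CutJoin (2*a+1) (2*a+2) (2*a) \<in> useful_ops (N_target n) {..<2*n+1} (N_state n a)"
    using assms by (intro CutJoin_in_useful_ops[where j="2*a+1" and i="2*a"])
      (auto simp: N_target_adj_def N_state_adj_def N_state_tel_def npair_def)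
  ultimately show "p \<in> useful_ops (N_target n) {..<2*n+1} (N_state n a)" by simp
qed

lemma op_apply_N_state:
  assumes "a < n"
  shows "op_apply (N_state n a) (CutJoin (2*a+1) (2*a+2) (2*a)) = N_state n (Suc a)"
  using assms by (subst op_apply_ngenome_CutJoin[where j="2*a+1" and k="2*a"])
    (auto simp: npair_def intro!: ngenome_cong simp: N_state_adj_def N_state_tel_def fun_upd_def
      elim!: evenE oddE, ((arith)+)?)

lemma n_scenarios_N_state:
  assumes "a + k = n"
  shows "n_scenarios (N_target n) {..<2*n+1} (N_state n a) k = 1"
  using assms
proof (induction k arbitrary: a)
  case 0
  then have "N_state n a = N_target n"
    by (intro ngenome_cong) (auto simp: N_state_adj_def N_target_adj_def N_state_tel_def N_target_tel_def)
  then show ?case by (simp add: n_scenarios_0)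
next
  case (Suc k a)
  then have a: "a < n" by simp
  have "n_scenarios (N_target n) {..<2*n+1} (N_state n a) (Suc k)
      = n_scenarios (N_target n) {..<2*n+1} (op_apply (N_state n a) (CutJoin (2*a+1) (2*a+2) (2*a))) k"
    using n_scenarios_Suc_useful[of "{..<2*n+1}" "N_target n" k "N_state n a"] missing_N_state[of a n]
      useful_ops_N_state[OF a] finite_N_target Suc.prems by (simp del: op_apply.simps)
  also have "\<dots> = 1" using Suc.IH[of "Suc a"] Suc.prems by (simp only: op_apply_N_state[OF a])
  finally show ?case .
qed

section \<open>M-shaped paths\<close>

lemma valid_ops_W_target: "{p \<in> ops_within {..<2*m}. op_valid (W_target m) p} = (\<lambda>k. Cut (npair (2*k))) ` {..<m}"
proof (intro equalityI subsetI)
  fix p assume "p \<in> {p \<in> ops_within {..<2*m}. op_valid (W_target m) p}"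
  then have v: "op_valid (W_target m) p" by simp
  show "p \<in> (\<lambda>k. Cut (npair (2*k))) ` {..<m}"
  proof (cases p)
    case (Cut s)
    then have "s \<in> W_target m" using v by simp
    then obtain i where "s = npair i" "W_target_adj m i" by (auto simp: ngenome_def)
    then show ?thesis using Cut by (auto simp: W_target_adj_def elim!: evenE)
  next
    case (Join s)
    then have "card s = 2" "\<forall>x\<in>s. {x} \<in> W_target m" using v by auto
    then obtain x where "x \<in> s" by fastforce
    then show ?thesis using \<open>\<forall>x\<in>s. {x} \<in> W_target m\<close> by (auto simp: singleton_in_ngenome)
  next
    case (CutJoin a b c)
    then show ?thesis using v by (auto simp: singleton_in_ngenome)
  qed
next
  fix p assume "p \<in> (\<lambda>k. Cut (npair (2*k))) ` {..<m}"
  then obtain k where "k < m" "p = Cut (npair (2*k))" by auto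
  moreover have "npair (2*k) \<in> W_target m" using \<open>k < m\<close> by (simp add: npair_in_ngenome W_target_adj_def)
  ultimately show "p \<in> {p \<in> ops_within {..<2*m}. op_valid (W_target m) p}"
    by (auto simp: ops_within_def npair_def)
qed

lemma n_scenarios_W_target_Suc:
  "n_scenarios T {..<2*m} (W_target m) (Suc m') = (\<Sum>k<m. n_scenarios T {..<2*m} (op_apply (W_target m) (Cut (npair (2*k)))) m')"
proof -
  have "n_scenarios T {..<2*m} (W_target m) (Suc m') = (\<Sum>p\<in>{p \<in> ops_within {..<2*m}. op_valid (W_target m) p}. n_scenarios T {..<2*m} (op_apply (W_target m) p) m')"
    by (simp add: n_scenarios_Suc)
  also have "\<dots> = (\<Sum>p\<in>(\<lambda>k. Cut (npair (2*k))) ` {..<m}. n_scenarios T {..<2*m} (op_apply (W_target m) p) m')"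
    by (simp only: valid_ops_W_target)
  also have "\<dots> = (\<Sum>k<m. n_scenarios T {..<2*m} (op_apply (W_target m) (Cut (npair (2*k)))) m')"
    by (rule sum.reindex_cong[where l="\<lambda>k. Cut (npair (2*k))"]) (auto simp: inj_on_def)
  finally show ?thesis .
qed

definition W_target_cut :: "nat \<Rightarrow> nat \<Rightarrow> nat set set" where
  "W_target_cut c k = ngenome ((W_target_adj c)(2*k := False)) ((\<lambda>_. False)(2*k := True, Suc (2*k) := True))"

lemma op_apply_W_target_Cut: "op_apply (W_target m) (Cut (npair (2*k))) = W_target_cut m k"
  by (simp only: op_apply_ngenome_Cut W_target_cut_def)

text \<open>The G1 of an M-shaped path of size m is W_target m.  After the first operation, a cut of
  {2k, 2k+1}, two W-shaped windows remain, which are sorted independently: in M_state m p q the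
  unsorted windows are [0, 2p] and [2q+1, 2m).\<close>

definition M_target_adj :: "nat \<Rightarrow> nat \<Rightarrow> bool" where "M_target_adj m i = (odd i \<and> i + 2 < 2*m)"

definition M_target_tel :: "nat \<Rightarrow> nat \<Rightarrow> bool" where "M_target_tel m i = (i = 0 \<or> i + 1 = 2*m)"

definition M_state_adj :: "nat \<Rightarrow> nat \<Rightarrow> nat \<Rightarrow> nat \<Rightarrow> bool" where
  "M_state_adj m p q i = ((even i \<and> i < 2*p) \<or> (odd i \<and> 2*p < i \<and> i < 2*q) \<or> (even i \<and> 2*q < i \<and> i < 2*m))"

definition M_state_tel :: "nat \<Rightarrow> nat \<Rightarrow> nat \<Rightarrow> bool" where "M_state_tel p q i = (i = 2*p \<or> i = 2*q+1)"

abbreviation M_target where "M_target m \<equiv> ngenome (M_target_adj m) (M_target_tel m)"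

abbreviation M_state where "M_state m p q \<equiv> ngenome (M_state_adj m p q) (M_state_tel p q)"

lemma M_target_Pow: "0 < m \<Longrightarrow> M_target m \<subseteq> Pow {..<2*m}"
  by (rule ngenome_Pow) (auto simp: M_target_adj_def M_target_tel_def)

lemma finite_M_target: "0 < m \<Longrightarrow> finite (M_target m)" using M_target_Pow by (meson finite_Pow_iff finite_lessThan finite_subset)

lemma M_state_CutJoin_cases:
  assumes "x \<noteq> y" "M_state_adj m p q j" "x = j \<and> y = Suc j \<or> x = Suc j \<and> y = j" "M_state_tel p q c"
    "(x = c \<and> M_target_tel m x) \<or> (x \<noteq> c \<and> M_target_adj m i \<and> (x = i \<and> c = Suc i \<or> x = Suc i \<and> c = i))"
    "p \<le> q" "q < m"
  shows "(c = 2*p \<and> x + 1 = 2*p \<and> y + 2 = 2*p) \<or> (c = 2*q+1 \<and> x = 2*q+2 \<and> y = 2*q+3)"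
proof -
  note h = assms[unfolded M_state_adj_def M_state_tel_def M_target_tel_def M_target_adj_def]
  show ?thesis
  proof (cases "c = 2*p")
    case True
    show ?thesis
    proof (cases "x = c")
      case True
      have False by (insert h(2,3,6,7) True \<open>c = 2*p\<close>, (elim disjE conjE evenE oddE; arith))
      then show ?thesis ..
    next
      case False
      have x: "x + 1 = 2*p" by (insert h(5) False \<open>c = 2*p\<close>, (elim disjE conjE evenE oddE; arith))
      have "y + 2 = 2*p" by (insert h(2,3,6,7) x, (elim disjE conjE evenE oddE; arith))
      then show ?thesis using x True by simp
    qed
  next
    case False
    then have c: "c = 2*q+1" using h(4) by simp
    show ?thesis
    proof (cases "x = c")
      case True
      have False by (insert h(2,3,6,7) True c, (elim disjE conjE evenE oddE; arith))
      then show ?thesis ..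
    next
      case False
      have x: "x = 2*q+2" by (insert h(5) False c, (elim disjE conjE evenE oddE; arith))
      have "y = 2*q+3" by (insert h(2,3,6,7) x, (elim disjE conjE evenE oddE; arith))
      then show ?thesis using x c by simp
    qed
  qed
qed

lemma missing_M_state:
  assumes pq: "p \<le> q" and qm: "q < m"
  shows "p + (m - Suc q) \<le> missing (M_target m) (M_state m p q)"
proof -
  let ?I = "(\<lambda>i. 2*i+1) ` ({..<p} \<union> {q..<m - 1})"
  have "?I \<subseteq> {i. M_target_adj m i \<and> \<not> M_state_adj m p q i}"
    using pq qm by (auto simp: M_target_adj_def M_state_adj_def)
  then have "card ?I \<le> card {i. M_target_adj m i \<and> \<not> M_state_adj m p q i}"
    by (rule card_mono[rotated]) (rule finite_subset[of _ "{..<2*m}"], auto simp: M_target_adj_def)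
  moreover have "card ?I = p + (m - Suc q)"
  proof -
    have "card ?I = card ({..<p} \<union> {q..<m - 1})" by (rule card_image) (auto simp: inj_on_def)
    also have "\<dots> = card {..<p} + card {q..<m - 1}" using pq by (intro card_Un_disjoint) auto
    finally show ?thesis by simp
  qed
  moreover have "card {i. M_target_adj m i \<and> \<not> M_state_adj m p q i} \<le> missing (M_target m) (M_state m p q)"
    by (rule missing_ngenome_ge) (rule finite_subset[of _ "{..<2*m}"], auto simp: M_target_adj_def)
  ultimately show ?thesis by simp
qed

lemma useful_ops_M_state:
  assumes pq: "p \<le> q" and qm: "q < m"
  shows "useful_ops (M_target m) {..<2*m} (M_state m p q)
       = (if p = 0 then {} else {CutJoin (2*p-1) (2*p-2) (2*p)})
       \<union> (if Suc q < m then {CutJoin (2*q+2) (2*q+3) (2*q+1)} else {})"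
    (is "_ = ?L \<union> ?R")
proof (intro equalityI subsetI)
  fix o' assume "o' \<in> useful_ops (M_target m) {..<2*m} (M_state m p q)"
  from useful_ops_ngenomeE[OF this] show "o' \<in> ?L \<union> ?R"
  proof (elim disjE exE conjE)
    fix i assume a: "M_target_adj m i" "M_state_tel p q i" "M_state_tel p q (Suc i)"
    have False
      by (insert a[unfolded M_state_tel_def M_target_adj_def] pq, (elim disjE conjE evenE oddE; arith))
    then show ?thesis ..
  next
    fix x y c j assume a: "o' = CutJoin x y c" "x \<noteq> y" "M_state_adj m p q j" "{x, y} = npair j"
      "M_state_tel p q c" "x = c" "M_target_tel m x"
    then have "(c = 2*p \<and> x + 1 = 2*p \<and> y + 2 = 2*p) \<or> (c = 2*q+1 \<and> x = 2*q+2 \<and> y = 2*q+3)"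
      using pq qm by (intro M_state_CutJoin_cases[where j=j and i=0]) (auto simp: doubleton_eq_npair)
    then show ?thesis using a(6) by auto
  next
    fix x y c j i assume a: "o' = CutJoin x y c" "x \<noteq> y" "M_state_adj m p q j" "{x, y} = npair j"
      "M_state_tel p q c" "x \<noteq> c" "M_target_adj m i" "{x, c} = npair i"
    then have e: "(c = 2*p \<and> x + 1 = 2*p \<and> y + 2 = 2*p) \<or> (c = 2*q+1 \<and> x = 2*q+2 \<and> y = 2*q+3)"
      using pq qm by (intro M_state_CutJoin_cases[where j=j and i=i]) (auto simp: doubleton_eq_npair)
    have "Suc q < m" if "c = 2*q+1" "x = 2*q+2"
      using a(7,8) that unfolding M_target_adj_def doubleton_eq_npair by arith
    then show ?thesis using e a(1) by (auto split: if_splits)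
  qed
next
  fix o' assume o: "o' \<in> ?L \<union> ?R"
  show "o' \<in> useful_ops (M_target m) {..<2*m} (M_state m p q)"
  proof (cases "o' = CutJoin (2*p-1) (2*p-2) (2*p) \<and> p \<noteq> 0")
    case True
    have "CutJoin (2*p-1) (2*p-2) (2*p) \<in> useful_ops (M_target m) {..<2*m} (M_state m p q)"
      using True pq qm by (intro CutJoin_in_useful_ops[where j="2*p-2" and i="2*p-1"])
        (auto simp: M_target_adj_def M_state_adj_def M_state_tel_def npair_def)
    then show ?thesis using True by simp
  next
    case False
    then have "o' = CutJoin (2*q+2) (2*q+3) (2*q+1)" "Suc q < m" using o by (auto split: if_splits)
    moreover have "CutJoin (2*q+2) (2*q+3) (2*q+1) \<in> useful_ops (M_target m) {..<2*m} (M_state m p q)"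
      using \<open>Suc q < m\<close> pq by (intro CutJoin_in_useful_ops[where j="2*q+2" and i="2*q+1"])
        (auto simp: M_target_adj_def M_state_adj_def M_state_tel_def npair_def)
    ultimately show ?thesis by simp
  qed
qed

lemma op_apply_M_state_left:
  assumes "p \<noteq> 0" "p \<le> q" "q < m"
  shows "op_apply (M_state m p q) (CutJoin (2*p-1) (2*p-2) (2*p)) = M_state m (p - 1) q"
  using assms by (subst op_apply_ngenome_CutJoin[where j="2*p-2" and k="2*p-1"])
    (auto simp: npair_def intro!: ngenome_cong simp: M_state_adj_def M_state_tel_def fun_upd_def
      elim!: evenE oddE, ((arith)+)?)

lemma op_apply_M_state_right:
  assumes "Suc q < m" "p \<le> q"
  shows "op_apply (M_state m p q) (CutJoin (2*q+2) (2*q+3) (2*q+1)) = M_state m p (Suc q)"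
  using assms by (subst op_apply_ngenome_CutJoin[where j="2*q+2" and k="2*q+1"])
    (auto simp: npair_def intro!: ngenome_cong simp: M_state_adj_def M_state_tel_def fun_upd_def
      elim!: evenE oddE, ((arith)+)?)

text \<open>Sorting the two windows is a shuffle of the p steps on the left with the remaining
  steps on the right, whence the binomial coefficient.\<close>
lemma n_scenarios_M_state:
  assumes "p \<le> q" "q < m" "p + (m - Suc q) = k"
  shows "n_scenarios (M_target m) {..<2*m} (M_state m p q) k = k choose p"
  using assms
proof (induction k arbitrary: p q)
  case 0
  then have "M_state m p q = M_target m"
    by (intro ngenome_cong) (auto simp: M_state_adj_def M_target_adj_def M_state_tel_def M_target_tel_def
        elim!: oddE evenE, ((arith)+)?)
  moreover have "p = 0" using 0 by simp
  ultimately show ?case by (simp add: n_scenarios_0)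
next
  case (Suc k p q)
  let ?N = "\<lambda>H. n_scenarios (M_target m) {..<2*m} H k"
  let ?H = "M_state m p q"
  let ?left = "CutJoin (2*p-1) (2*p-2) (2*p)"
  let ?right = "CutJoin (2*q+2) (2*q+3) (2*q+1)"
  have "n_scenarios (M_target m) {..<2*m} ?H (Suc k)
      = (\<Sum>o'\<in>useful_ops (M_target m) {..<2*m} ?H. ?N (op_apply ?H o'))"
    using missing_M_state[of p q m] Suc.prems finite_M_target[of m]
    by (intro n_scenarios_Suc_useful) auto
  also have "\<dots> = (if p = 0 then 0 else ?N (op_apply ?H ?left))
      + (if Suc q < m then ?N (op_apply ?H ?right) else 0)"
    using Suc.prems(1)
    by (simp only: useful_ops_M_state[OF Suc.prems(1,2)]) (subst sum.union_disjoint; auto)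
  also have "\<dots> = (if p = 0 then 0 else k choose (p - 1)) + (if Suc q < m then k choose p else 0)"
    using Suc.IH[of "p - 1" q] Suc.IH[of p "Suc q"] Suc.prems
      op_apply_M_state_left[of p q m] op_apply_M_state_right[of q m p] by auto
  also have "\<dots> = Suc k choose p"
    using Suc.prems by (cases p) (auto simp: not_less_eq)
  finally show ?case .
qed

lemma n_scenarios_M:
  assumes "m = Suc m'"
  shows "n_scenarios (M_target m) {..<2*m} (W_target m) m = 2 ^ m'"
proof -
  have "n_scenarios (M_target m) {..<2*m} (W_target m) m = (\<Sum>k<m. n_scenarios (M_target m) {..<2*m} (W_target_cut m k) m')"
    using n_scenarios_W_target_Suc[of "M_target m" m m'] assms by (simp only: op_apply_W_target_Cut)
  also have "\<dots> = (\<Sum>k<m. m' choose k)"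
  proof (rule sum.cong)
    fix k assume k: "k \<in> {..<m}"
    have "W_target_cut m k = M_state m k k" unfolding W_target_cut_def
      using k by (intro ngenome_cong) (auto simp: W_target_adj_def M_state_adj_def M_state_tel_def elim!: evenE oddE, ((arith)+)?)
    moreover have "n_scenarios (M_target m) {..<2*m} (M_state m k k) m' = m' choose k"
      using n_scenarios_M_state[of k k m m'] k assms by auto
    ultimately show "n_scenarios (M_target m) {..<2*m} (W_target_cut m k) m' = m' choose k" by simp
  qed simp
  also have "\<dots> = 2 ^ m'" using assms by (simp add: lessThan_Suc_atMost choose_row_sum)
  finally show ?thesis .
qed

section \<open>Crowns\<close>

text \<open>A crown of size c has no telomere, so its first operation is one of the c cuts of
  W_target c; the rotation rot c k carries the W-shaped path W_state c 0 c, with target W_target c,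
  to the result of the k-th cut, with target the G2 of the crown.\<close>

definition crown_target :: "nat \<Rightarrow> nat set set" where
  "crown_target c = insert {2*c - 1, 0} (ngenome (\<lambda>j. odd j \<and> j + 2 < 2*c) (\<lambda>_. False))"

definition rot :: "nat \<Rightarrow> nat \<Rightarrow> nat \<Rightarrow> nat" where
  "rot c k i = (if i + 2*k + 1 < 2*c then i + 2*k + 1 else i + 2*k + 1 - 2*c)"

definition rot_inv :: "nat \<Rightarrow> nat \<Rightarrow> nat \<Rightarrow> nat" where
  "rot_inv c k i = (if 2*k + 1 \<le> i then i - (2*k + 1) else i + 2*c - (2*k + 1))"

lemma rot_rot_inv: "k < c \<Longrightarrow> i < 2*c \<Longrightarrow> rot c k (rot_inv c k i) = i \<and> rot_inv c k i < 2*c"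
  unfolding rot_def rot_inv_def by auto

lemma rot_lt: "k < c \<Longrightarrow> i < 2*c \<Longrightarrow> rot c k i < 2*c"
  unfolding rot_def by auto

lemma inj_on_rot: "k < c \<Longrightarrow> inj_on (rot c k) {..<2*c}"
  unfolding inj_on_def rot_def by auto

lemma rot_image: "k < c \<Longrightarrow> rot c k ` {..<2*c} = {..<2*c}"
proof (intro equalityI subsetI)
  fix x assume "k < c" "x \<in> rot c k ` {..<2*c}"
  then show "x \<in> {..<2*c}" using rot_lt by auto
next
  fix x assume "k < c" "x \<in> {..<2*c}"
  then show "x \<in> rot c k ` {..<2*c}" using rot_rot_inv[of k c x] by (metis imageI lessThan_iff)
qed

lemma map_vertices_rot_W_state:
  assumes k: "k < c"
  shows "map_vertices (rot c k) (W_state c 0 c) = W_target_cut c k"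
  unfolding W_target_cut_def
proof (rule map_vertices_ngenome)
  fix j assume "W_state_adj c 0 c j"
  then show "rot c k (Suc j) = Suc (rot c k j)" unfolding W_state_adj_def rot_def
    by (auto elim!: evenE oddE, ((arith)+)?)
next
  fix i
  show "((W_target_adj c)(2*k := False)) i = (\<exists>j. W_state_adj c 0 c j \<and> i = rot c k j)"
  proof
    assume a: "((W_target_adj c)(2*k := False)) i"
    then have i: "i < 2*c" "even i" "i \<noteq> 2*k" by (auto simp: W_target_adj_def split: if_splits)
    have "W_state_adj c 0 c (rot_inv c k i)" using i k unfolding W_state_adj_def rot_inv_def by (auto elim!: evenE, ((arith)+)?)
    moreover have "i = rot c k (rot_inv c k i)" using rot_rot_inv[OF k i(1)] by simp
    ultimately show "\<exists>j. W_state_adj c 0 c j \<and> i = rot c k j" by blast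
  next
    assume "\<exists>j. W_state_adj c 0 c j \<and> i = rot c k j"
    then obtain j where j: "W_state_adj c 0 c j" "i = rot c k j" by blast
    have jo: "odd j" "j + 2 < 2*c" using j(1) by (auto simp: W_state_adj_def)
    then obtain l where l: "j = 2*l+1" by (auto elim: oddE)
    have ilt: "i < 2*c" using j(2) jo rot_lt[OF k, of j] by simp
    have ie: "i = 2*(if l + k + 1 < c then l + k + 1 else l + k + 1 - c)"
      using j(2) l by (simp add: rot_def right_diff_distrib')
    have "i \<noteq> 2*k" using ie jo(2) l by (auto split: if_splits)
    then show "((W_target_adj c)(2*k := False)) i" using ie ilt by (simp add: W_target_adj_def)
  qed
next
  fix i
  show "((\<lambda>_. False)(2*k := True, Suc (2*k) := True)) i = (\<exists>j. W_state_tel 0 c j \<and> i = rot c k j)"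
  proof
    assume "((\<lambda>_. False)(2*k := True, Suc (2*k) := True)) i"
    then have "i = 2*k \<or> i = Suc (2*k)" by (auto split: if_splits)
    then show "\<exists>j. W_state_tel 0 c j \<and> i = rot c k j"
    proof
      assume "i = 2*k"
      then have "W_state_tel 0 c (2*c - 1) \<and> i = rot c k (2*c - 1)" using k by (auto simp: W_state_tel_def rot_def)
      then show ?thesis by blast
    next
      assume "i = Suc (2*k)"
      then have "W_state_tel 0 c 0 \<and> i = rot c k 0" using k by (auto simp: W_state_tel_def rot_def)
      then show ?thesis by blast
    qed
  next
    assume "\<exists>j. W_state_tel 0 c j \<and> i = rot c k j"
    then show "((\<lambda>_. False)(2*k := True, Suc (2*k) := True)) i" using k
      unfolding W_state_tel_def rot_def by auto
  qed
qed

lemma map_vertices_rot_W_target: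
  assumes k: "k < c"
  shows "map_vertices (rot c k) (W_target c) = crown_target c"
proof -
  let ?i0 = "2*(c - k - 1)"
  have "W_target c = insert (npair ?i0) (ngenome ((W_target_adj c)(?i0 := False)) (\<lambda>_. False))"
    using k by (simp only: ngenome_insert_npair) (intro ngenome_cong, auto simp: W_target_adj_def)
  then have "map_vertices (rot c k) (W_target c) = insert (rot c k ` npair ?i0) (map_vertices (rot c k) (ngenome ((W_target_adj c)(?i0 := False)) (\<lambda>_. False)))"
    by (simp add: map_vertices_insert)
  also have "rot c k ` npair ?i0 = {2*c - 1, 0}" using k by (auto simp: npair_def rot_def)
  also have "map_vertices (rot c k) (ngenome ((W_target_adj c)(?i0 := False)) (\<lambda>_. False)) = ngenome (\<lambda>j. odd j \<and> j + 2 < 2*c) (\<lambda>_. False)"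
  proof (rule map_vertices_ngenome)
    fix j assume "((W_target_adj c)(?i0 := False)) j"
    then show "rot c k (Suc j) = Suc (rot c k j)" using k unfolding W_target_adj_def rot_def
      by (auto split: if_splits elim!: evenE, ((arith)+)?)
  next
    fix i
    show "(odd i \<and> i + 2 < 2*c) = (\<exists>j. ((W_target_adj c)(?i0 := False)) j \<and> i = rot c k j)"
    proof
      assume i: "odd i \<and> i + 2 < 2*c"
      have "((W_target_adj c)(?i0 := False)) (rot_inv c k i)" using i k unfolding W_target_adj_def rot_inv_def
        by (auto elim!: oddE, ((arith)+)?)
      moreover have "i = rot c k (rot_inv c k i)" using rot_rot_inv[OF k, of i] i by simp
      ultimately show "\<exists>j. ((W_target_adj c)(?i0 := False)) j \<and> i = rot c k j" by blast
    next
      assume "\<exists>j. ((W_target_adj c)(?i0 := False)) j \<and> i = rot c k j"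
      then obtain j where j: "((W_target_adj c)(?i0 := False)) j" "i = rot c k j" by blast
      then show "odd i \<and> i + 2 < 2*c" using k unfolding W_target_adj_def rot_def
        by (auto split: if_splits elim!: evenE, ((arith)+)?)
    qed
  qed simp
  finally show ?thesis by (simp add: crown_target_def)
qed

lemma n_scenarios_crown:
  assumes c: "c = Suc c'"
  shows "n_scenarios (crown_target c) {..<2*c} (W_target c) (Suc c) = c * 2 ^ c'"
proof -
  have "n_scenarios (crown_target c) {..<2*c} (W_target c) (Suc c) = (\<Sum>k<c. n_scenarios (crown_target c) {..<2*c} (W_target_cut c k) c)"
    using n_scenarios_W_target_Suc[of "crown_target c" c c] by (simp only: op_apply_W_target_Cut)
  also have "\<dots> = (\<Sum>k<c. 2 ^ c')"
  proof (rule sum.cong)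
    fix k assume "k \<in> {..<c}"
    then have k: "k < c" by simp
    have "n_scenarios (crown_target c) {..<2*c} (W_target_cut c k) c =
        n_scenarios (map_vertices (rot c k) (W_target c)) (rot c k ` {..<2*c}) (map_vertices (rot c k) (W_state c 0 c)) c"
      by (simp only: map_vertices_rot_W_state[OF k] map_vertices_rot_W_target[OF k] rot_image[OF k])
    also have "\<dots> = n_scenarios (W_target c) {..<2*c} (W_state c 0 c) c"
    proof (rule n_scenarios_map[OF inj_on_rot[OF k]])
      show "W_state c 0 c \<subseteq> Pow {..<2*c}" using c by (intro W_state_Pow) auto
      show "W_target c \<subseteq> Pow {..<2*c}" by (rule W_target_Pow)
    qed simp
    also have "\<dots> = 2 ^ c'" using n_scenarios_W[OF c] .
    finally show "n_scenarios (crown_target c) {..<2*c} (W_target_cut c k) c = 2 ^ c'" .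
  qed simp
  finally show ?thesis by simp
qed

text \<open>The extremities of a component are numbered 0, 1, ... along a walk alternating between the
  genomes, side s k (True for G1) being the genome in which the step from k to k+1 is taken;
  path_partner L s b k and cycle_partner L s b k are the numbers of the partner of k in genome b.\<close>

definition side :: "bool \<Rightarrow> nat \<Rightarrow> bool" where "side s k = (if even k then s else \<not> s)"

lemma side_Suc[simp]: "side s (Suc k) = (\<not> side s k)" by (simp add: side_def)

lemma side_0[simp]: "side s 0 = s" by (simp add: side_def)

definition path_partner :: "nat \<Rightarrow> bool \<Rightarrow> bool \<Rightarrow> nat \<Rightarrow> nat" where
  "path_partner L s b k = (if side s k = b then (if Suc k < L then Suc k else k) else (if 0 < k then k - 1 else k))"

definition cycle_partner :: "nat \<Rightarrow> bool \<Rightarrow> bool \<Rightarrow> nat \<Rightarrow> nat" where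
  "cycle_partner L s b k = (if side s k = b then (if Suc k < L then Suc k else 0) else (if 0 < k then k - 1 else L - 1))"

definition index_genome :: "(nat \<Rightarrow> nat) \<Rightarrow> nat \<Rightarrow> nat set set" where
  "index_genome f L = {{k, f k} | k. k < L}"

lemma index_genome_Pow: "(\<And>k. k < L \<Longrightarrow> f k < L) \<Longrightarrow> index_genome f L \<subseteq> Pow {..<L}"
  unfolding index_genome_def by auto

lemma index_genome_cong: "(\<And>k. k < L \<Longrightarrow> f k = g k) \<Longrightarrow> index_genome f L = index_genome g L"
  unfolding index_genome_def by force

lemma double_less_simps[simp]:
  "(Suc (2*j) < 2*w) = (j < w)"
  "(Suc (Suc (2*j)) < 2*w) = (Suc j < w)"
  "(Suc (Suc (Suc (2*j))) < 2*w) = (Suc j < w)"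
  "(2*j = Suc (2*w)) = False"
  "(Suc (2*j) = 2*w) = False"
  "(2*w \<le> Suc (2*j)) = (w \<le> j)"
  "(2*w \<le> Suc (Suc (2*j))) = (w \<le> Suc j)"
  for j w :: nat
  by presburger+

lemma index_genome_eq_ngenome:
  assumes "\<And>k. k < L \<Longrightarrow> {k, f k} \<in> ngenome P Q"
    "\<And>i. P i \<Longrightarrow> \<exists>k<L. {k, f k} = npair i"
    "\<And>i. Q i \<Longrightarrow> \<exists>k<L. {k, f k} = {i}"
  shows "index_genome f L = ngenome P Q"
proof (intro equalityI subsetI)
  fix u assume "u \<in> index_genome f L"
  then show "u \<in> ngenome P Q" using assms(1) by (auto simp: index_genome_def)
next
  fix u assume "u \<in> ngenome P Q"
  then consider i where "P i" "u = npair i" | i where "Q i" "u = {i}" by (auto simp: ngenome_def)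
  then show "u \<in> index_genome f L"
  proof cases
    case 1 then show ?thesis using assms(2)[of i] by (auto simp: index_genome_def)
  next
    case 2 then show ?thesis using assms(3)[of i] by (auto simp: index_genome_def)
  qed
qed

lemma in_ngenome_up: "P k \<Longrightarrow> f k = Suc k \<Longrightarrow> {k, f k} \<in> ngenome P Q" by (metis npair_in_ngenome npair_def)

lemma in_ngenome_down: "P j \<Longrightarrow> k = Suc j \<Longrightarrow> f k = j \<Longrightarrow> {k, f k} \<in> ngenome P Q"
  by (metis insert_commute npair_in_ngenome npair_def)

lemma in_ngenome_self: "Q k \<Longrightarrow> f k = k \<Longrightarrow> {k, f k} \<in> ngenome P Q" by (simp add: singleton_in_ngenome)

lemma ex_index_npair: "i < L \<Longrightarrow> f i = Suc i \<Longrightarrow> \<exists>k<L. {k, f k} = npair i" by (auto simp: npair_def)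

lemma ex_index_singleton: "i < L \<Longrightarrow> f i = i \<Longrightarrow> \<exists>k<L. {k, f k} = {i}" by auto

lemma nat_parity_cases:
  fixes k :: nat
  obtains "k = 0" | j where "k = 2*j + 2" | j where "k = 2*j + 1"
proof (cases "even k")
  case True
  then obtain j where j: "k = 2*j" by (auto elim: evenE)
  show ?thesis
  proof (cases j)
    case 0 then show ?thesis using that j by simp
  next
    case (Suc j') then show ?thesis using that(2)[of j'] j by simp
  qed
next
  case False
  then obtain j where "k = 2*j + 1" by (auto elim: oddE)
  then show ?thesis using that by blast
qed

lemma W_path_G1: assumes w: "0 < w" shows "index_genome (path_partner (2*w) False True) (2*w) = W_state w 0 w"
proof (rule index_genome_eq_ngenome)
  fix k assume k: "k < 2*w"
  show "{k, path_partner (2*w) False True k} \<in> W_state w 0 w"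
  proof (cases k rule: nat_parity_cases)
    case 1 then show ?thesis by (intro in_ngenome_self) (auto simp: path_partner_def side_def W_state_tel_def)
  next
    case (2 j)
    show ?thesis using k 2
      by (intro in_ngenome_down[where j="2*j+1"]) (auto simp: path_partner_def side_def W_state_adj_def)
  next
    case (3 j) show ?thesis
    proof (cases "Suc k < 2*w")
      case True then show ?thesis using 3
        by (intro in_ngenome_up) (auto simp: path_partner_def side_def W_state_adj_def)
    next
      case False then show ?thesis using 3 k
        by (intro in_ngenome_self) (auto simp: path_partner_def side_def W_state_tel_def)
    qed
  qed
next
  fix i assume "W_state_adj w 0 w i"
  then obtain j where "i = 2*j+1" "2*j + 3 < 2*w" by (auto simp: W_state_adj_def elim!: oddE)
  then show "\<exists>k<2*w. {k, path_partner (2*w) False True k} = npair i" by (intro ex_index_npair) (auto simp: path_partner_def side_def)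
next
  fix i assume "W_state_tel 0 w i"
  then have "i = 0 \<or> i + 1 = 2*w" by (simp add: W_state_tel_def)
  then show "\<exists>k<2*w. {k, path_partner (2*w) False True k} = {i}"
  proof
    assume "i = 0" then show ?thesis using \<open>W_state_tel 0 w i\<close> w by (intro ex_index_singleton) (auto simp: W_state_tel_def path_partner_def side_def)
  next
    assume a: "i + 1 = 2*w"
    then obtain w' where "w = Suc w'" "i = 2*w' + 1" by (cases w) auto
    then show ?thesis by (intro ex_index_singleton) (auto simp: path_partner_def side_def)
  qed
qed

lemma W_path_G2: assumes w: "0 < w" shows "index_genome (path_partner (2*w) False False) (2*w) = W_target w"
proof (rule index_genome_eq_ngenome)
  fix k assume k: "k < 2*w"
  show "{k, path_partner (2*w) False False k} \<in> W_target w"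
  proof (cases k rule: nat_parity_cases)
    case 1 then show ?thesis using w by (intro in_ngenome_up) (auto simp: path_partner_def side_def W_target_adj_def)
  next
    case (2 j) then show ?thesis using k by (intro in_ngenome_up) (auto simp: path_partner_def side_def W_target_adj_def)
  next
    case (3 j) then show ?thesis using k
      by (intro in_ngenome_down[where j="2*j"]) (auto simp: path_partner_def side_def W_target_adj_def)
  qed
next
  fix i assume "W_target_adj w i"
  then obtain j where "i = 2*j" "j < w" by (auto simp: W_target_adj_def elim!: evenE)
  then show "\<exists>k<2*w. {k, path_partner (2*w) False False k} = npair i" by (intro ex_index_npair) (auto simp: path_partner_def side_def)
qed simp

lemma N_path_G1: "index_genome (path_partner (2*n+1) False True) (2*n+1) = N_state n 0"
proof (rule index_genome_eq_ngenome)
  fix k assume k: "k < 2*n+1"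
  show "{k, path_partner (2*n+1) False True k} \<in> N_state n 0"
  proof (cases k rule: nat_parity_cases)
    case 1 then show ?thesis by (intro in_ngenome_self) (auto simp: path_partner_def side_def N_state_tel_def)
  next
    case (2 j) then show ?thesis using k
      by (intro in_ngenome_down[where j="2*j+1"]) (auto simp: path_partner_def side_def N_state_adj_def)
  next
    case (3 j) then show ?thesis using k
      by (intro in_ngenome_up) (auto simp: path_partner_def side_def N_state_adj_def)
  qed
next
  fix i assume "N_state_adj n 0 i"
  then obtain j where "i = 2*j+1" "2*j + 1 < 2*n" by (auto simp: N_state_adj_def elim!: oddE)
  then show "\<exists>k<2*n+1. {k, path_partner (2*n+1) False True k} = npair i" by (intro ex_index_npair) (auto simp: path_partner_def side_def)
next
  fix i assume "N_state_tel 0 i"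
  then show "\<exists>k<2*n+1. {k, path_partner (2*n+1) False True k} = {i}" by (intro ex_index_singleton) (auto simp: path_partner_def side_def N_state_tel_def)
qed

lemma N_path_G2: "index_genome (path_partner (2*n+1) False False) (2*n+1) = N_target n"
proof (rule index_genome_eq_ngenome)
  fix k assume k: "k < 2*n+1"
  show "{k, path_partner (2*n+1) False False k} \<in> N_target n"
  proof (cases k rule: nat_parity_cases)
    case 1 then show ?thesis
    proof (cases "n = 0")
      case True then show ?thesis using 1 by (intro in_ngenome_self) (auto simp: path_partner_def side_def N_target_tel_def)
    next
      case False then show ?thesis using 1 by (intro in_ngenome_up) (auto simp: path_partner_def side_def N_target_adj_def)
    qed
  next
    case (2 j) show ?thesis
    proof (cases "Suc j < n")
      case True then show ?thesis using 2 by (intro in_ngenome_up) (auto simp: path_partner_def side_def N_target_adj_def)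
    next
      case False then have "j + 1 = n" using k 2 by simp
      then show ?thesis using 2 by (intro in_ngenome_self) (auto simp: path_partner_def side_def N_target_tel_def)
    qed
  next
    case (3 j) then show ?thesis using k
      by (intro in_ngenome_down[where j="2*j"]) (auto simp: path_partner_def side_def N_target_adj_def)
  qed
next
  fix i assume "N_target_adj n i"
  then obtain j where "i = 2*j" "j < n" by (auto simp: N_target_adj_def elim!: evenE)
  then show "\<exists>k<2*n+1. {k, path_partner (2*n+1) False False k} = npair i" by (intro ex_index_npair) (auto simp: path_partner_def side_def)
next
  fix i assume "N_target_tel n i"
  then show "\<exists>k<2*n+1. {k, path_partner (2*n+1) False False k} = {i}" by (intro ex_index_singleton) (auto simp: path_partner_def side_def N_target_tel_def)
qed

lemma path_partner_swap: "path_partner L True b = path_partner L False (\<not> b)"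
  by (auto simp: path_partner_def side_def fun_eq_iff)

lemma M_path_G1: "0 < m \<Longrightarrow> index_genome (path_partner (2*m) True True) (2*m) = W_target m"
  by (simp add: path_partner_swap W_path_G2)

lemma M_path_G2: "0 < m \<Longrightarrow> index_genome (path_partner (2*m) True False) (2*m) = M_target m"
proof -
  assume m: "0 < m"
  have "index_genome (path_partner (2*m) True False) (2*m) = W_state m 0 m" using m by (simp add: path_partner_swap W_path_G1)
  also have "\<dots> = M_target m" by (intro ngenome_cong) (auto simp: W_state_adj_def W_state_tel_def M_target_adj_def M_target_tel_def elim!: oddE)
  finally show ?thesis .
qed

lemma cycle_partner_eq_path_partner: "0 < c \<Longrightarrow> k < 2*c \<Longrightarrow> cycle_partner (2*c) True True k = path_partner (2*c) True True k"
  by (cases k rule: nat_parity_cases) (auto simp: cycle_partner_def path_partner_def side_def)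

lemma crown_G1: "0 < c \<Longrightarrow> index_genome (cycle_partner (2*c) True True) (2*c) = W_target c"
proof -
  assume "0 < c"
  then have "index_genome (cycle_partner (2*c) True True) (2*c) = index_genome (path_partner (2*c) True True) (2*c)" by (intro index_genome_cong cycle_partner_eq_path_partner)
  then show ?thesis using M_path_G1[OF \<open>0 < c\<close>] by simp
qed

lemma crown_G2: "0 < c \<Longrightarrow> index_genome (cycle_partner (2*c) True False) (2*c) = crown_target c"
proof (intro equalityI subsetI)
  fix u assume c: "0 < c" and "u \<in> index_genome (cycle_partner (2*c) True False) (2*c)"
  then obtain k where k: "k < 2*c" "u = {k, cycle_partner (2*c) True False k}" by (auto simp: index_genome_def)
  show "u \<in> crown_target c"
  proof (cases k rule: nat_parity_cases)
    case 1 then show ?thesis using k c by (auto simp: cycle_partner_def side_def crown_target_def)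
  next
    case (2 j)
    then have "u = npair (2*j+1)" using k by (auto simp: cycle_partner_def side_def npair_def)
    moreover have "2*j+1 + 2 < 2*c" using k 2 by simp
    ultimately show ?thesis by (simp add: crown_target_def npair_in_ngenome)
  next
    case (3 j) show ?thesis
    proof (cases "Suc k < 2*c")
      case True
      then have "u = npair (2*j+1)" using k 3 by (auto simp: cycle_partner_def side_def npair_def)
      moreover have "2*j+1 + 2 < 2*c" using True 3 by simp
      ultimately show ?thesis by (simp add: crown_target_def npair_in_ngenome)
    next
      case False
      then have "u = {2*c - 1, 0}" using k 3 by (auto simp: cycle_partner_def side_def)
      then show ?thesis by (simp add: crown_target_def)
    qed
  qed
next
  fix u assume c: "0 < c" and "u \<in> crown_target c"
  then consider "u = {2*c - 1, 0}" | i where "odd i" "i + 2 < 2*c" "u = npair i"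
    by (auto simp: crown_target_def ngenome_def)
  then show "u \<in> index_genome (cycle_partner (2*c) True False) (2*c)"
  proof cases
    case 1
    have "cycle_partner (2*c) True False 0 = 2*c - 1" by (simp add: cycle_partner_def side_def)
    then have "u = {0, cycle_partner (2*c) True False 0}" using 1 by auto
    then show ?thesis using c by (auto simp: index_genome_def)
  next
    case 2
    then obtain j where j: "i = 2*j+1" by (auto elim: oddE)
    have "u = {i, cycle_partner (2*c) True False i}" using 2 j by (auto simp: cycle_partner_def side_def npair_def)
    then show ?thesis using 2 by (auto simp: index_genome_def)
  qed
qed

definition partition12 :: "'e set \<Rightarrow> 'e set set \<Rightarrow> bool" where
  "partition12 E G \<longleftrightarrow> \<Union>G = E \<and> (\<forall>u\<in>G. card u = 1 \<or> card u = 2)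
     \<and> (\<forall>u\<in>G. \<forall>v\<in>G. u \<noteq> v \<longrightarrow> u \<inter> v = {})"

definition block_of :: "'e set set \<Rightarrow> 'e \<Rightarrow> 'e set" where
  "block_of G x = (THE u. u \<in> G \<and> x \<in> u)"

definition partner :: "'e set set \<Rightarrow> 'e \<Rightarrow> 'e" where
  "partner G x = (SOME y. block_of G x = {x, y})"

lemma partition12_unique: "partition12 E G \<Longrightarrow> u \<in> G \<Longrightarrow> v \<in> G \<Longrightarrow> x \<in> u \<Longrightarrow> x \<in> v \<Longrightarrow> u = v"
  unfolding partition12_def by blast

lemma block_of_eq: assumes "partition12 E G" "u \<in> G" "x \<in> u" shows "block_of G x = u"
  unfolding block_of_def using assms partition12_unique[OF assms(1)] by (intro the_equality) auto

lemma block_of_in: assumes "partition12 E G" "x \<in> E" shows "block_of G x \<in> G \<and> x \<in> block_of G x"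
proof -
  obtain u where "u \<in> G" "x \<in> u" using assms by (auto simp: partition12_def)
  then show ?thesis using block_of_eq[OF assms(1)] by simp
qed

lemma partition12_card: "partition12 E G \<Longrightarrow> u \<in> G \<Longrightarrow> card u = 1 \<or> card u = 2"
  unfolding partition12_def by blast

lemma partition12_subset: "partition12 E G \<Longrightarrow> u \<in> G \<Longrightarrow> u \<subseteq> E"
  unfolding partition12_def by blast

lemma block_of_partner: assumes "partition12 E G" "x \<in> E" shows "block_of G x = {x, partner G x}"
proof -
  have u: "block_of G x \<in> G" "x \<in> block_of G x" using block_of_in[OF assms] by auto
  have "\<exists>y. block_of G x = {x, y}"
  proof (cases "card (block_of G x) = 1")
    case True
    then obtain z where "block_of G x = {z}" by (auto simp: card_1_singleton_iff)
    then show ?thesis using u by auto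
  next
    case False
    then have "card (block_of G x) = 2" using partition12_card[OF assms(1) u(1)] by simp
    then obtain a b where ab: "block_of G x = {a, b}" "a \<noteq> b" by (auto simp: card_2_iff)
    then show ?thesis using u by (metis insertE insert_commute singletonD)
  qed
  then show ?thesis unfolding partner_def by (rule someI_ex)
qed

lemma partner_in: assumes "partition12 E G" "x \<in> E" shows "partner G x \<in> E"
  using block_of_partner[OF assms] block_of_in[OF assms] partition12_subset[OF assms(1)] by blast

lemma partner_partner: assumes "partition12 E G" "x \<in> E" shows "partner G (partner G x) = x"
proof -
  have y: "partner G x \<in> E" by (rule partner_in[OF assms])
  have "block_of G (partner G x) = block_of G x"
    using block_of_in[OF assms] block_of_partner[OF assms] by (intro block_of_eq[OF assms(1)]) auto
  then have "{partner G x, partner G (partner G x)} = {x, partner G x}" using block_of_partner[OF assms(1) y] block_of_partner[OF assms] by simp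
  then show ?thesis by (metis doubleton_eq_iff)
qed

lemma block_eq_partner: assumes "partition12 E G" "x \<in> E" "u \<in> G" "x \<in> u" shows "u = {x, partner G x}"
  using block_of_eq[OF assms(1,3,4)] block_of_partner[OF assms(1,2)] by simp

lemma singleton_in_iff_partner: assumes "partition12 E G" "x \<in> E" shows "({x} \<in> G) = (partner G x = x)"
proof
  assume "{x} \<in> G" then show "partner G x = x" using block_eq_partner[OF assms, of "{x}"] by auto
next
  assume "partner G x = x" then show "{x} \<in> G" using block_of_partner[OF assms] block_of_in[OF assms] by simp
qed

lemma partition12I:
  assumes "\<Union>G = E" "\<And>u. u \<in> G \<Longrightarrow> card u = 1 \<or> card u = 2"
    "\<And>u v x. u \<in> G \<Longrightarrow> v \<in> G \<Longrightarrow> x \<in> u \<Longrightarrow> x \<in> v \<Longrightarrow> u = v"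
  shows "partition12 E G"
  unfolding partition12_def using assms by blast

lemma partition12_op_apply:
  assumes p: "partition12 E G" and v: "op_valid G p"
  shows "partition12 E (op_apply G p)"
proof -
  have U: "\<Union>G = E" using p by (simp add: partition12_def)
  have uq: "\<And>u v x. u \<in> G \<Longrightarrow> v \<in> G \<Longrightarrow> x \<in> u \<Longrightarrow> x \<in> v \<Longrightarrow> u = v" using partition12_unique[OF p] by blast
  have cd: "\<And>u. u \<in> G \<Longrightarrow> card u = 1 \<or> card u = 2" using partition12_card[OF p] by blast
  show ?thesis
  proof (cases p)
    case (Cut s)
    then have s: "s \<in> G" "card s = 2" using v by auto
    then obtain a b where ab: "s = {a, b}" "a \<noteq> b" by (auto simp: card_2_iff)
    have G': "op_apply G p = (G - {s}) \<union> {{a}, {b}}" using Cut ab by auto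
    show ?thesis unfolding G'
    proof (rule partition12I)
      show "\<Union>(G - {s} \<union> {{a}, {b}}) = E" using U s(1) ab by auto
      show "\<And>u. u \<in> G - {s} \<union> {{a}, {b}} \<Longrightarrow> card u = 1 \<or> card u = 2" using cd by auto
      fix u v x assume "u \<in> G - {s} \<union> {{a}, {b}}" "v \<in> G - {s} \<union> {{a}, {b}}" "x \<in> u" "x \<in> v"
      then show "u = v" using uq[of _ s] s(1) ab uq by auto
    qed
  next
    case (Join s)
    then have s: "card s = 2" "\<forall>x\<in>s. {x} \<in> G" using v by auto
    then obtain a b where ab: "s = {a, b}" "a \<noteq> b" by (auto simp: card_2_iff)
    have G': "op_apply G p = (G - {{a}, {b}}) \<union> {{a, b}}" using Join ab by auto
    have ins: "{a} \<in> G" "{b} \<in> G" using s ab by auto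
    show ?thesis unfolding G'
    proof (rule partition12I)
      show "\<Union>(G - {{a}, {b}} \<union> {{a, b}}) = E" using U ins by auto
      show "\<And>u. u \<in> G - {{a}, {b}} \<union> {{a, b}} \<Longrightarrow> card u = 1 \<or> card u = 2" using cd ab by auto
      fix u v x assume "u \<in> G - {{a}, {b}} \<union> {{a, b}}" "v \<in> G - {{a}, {b}} \<union> {{a, b}}" "x \<in> u" "x \<in> v"
      then show "u = v" using uq[of _ "{a}"] uq[of _ "{b}"] ins uq by auto
    qed
  next
    case (CutJoin a b c)
    then have v': "a \<noteq> b" "{a, b} \<in> G" "{c} \<in> G" using v by auto
    have ca: "c \<noteq> a" "c \<noteq> b" using uq[OF v'(2) v'(3), of a] uq[OF v'(2) v'(3), of b] v'(1) by auto
    have G': "op_apply G p = (G - {{a, b}, {c}}) \<union> {{a, c}, {b}}" using CutJoin by auto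
    show ?thesis unfolding G'
    proof (rule partition12I)
      show "\<Union>(G - {{a, b}, {c}} \<union> {{a, c}, {b}}) = E" using U v' by auto
      show "\<And>u. u \<in> G - {{a, b}, {c}} \<union> {{a, c}, {b}} \<Longrightarrow> card u = 1 \<or> card u = 2" using cd ca by auto
      fix u v x assume "u \<in> G - {{a, b}, {c}} \<union> {{a, c}, {b}}" "v \<in> G - {{a, b}, {c}} \<union> {{a, c}, {b}}" "x \<in> u" "x \<in> v"
      then show "u = v" using uq[of _ "{a, b}"] uq[of _ "{c}"] v' ca uq by auto
    qed
  qed
qed

definition restr_to :: "'e set \<Rightarrow> 'e set set \<Rightarrow> 'e set set" where
  "restr_to B G = {u \<in> G. u \<subseteq> B}"

definition closed_in :: "'e set \<Rightarrow> 'e set set \<Rightarrow> bool" where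
  "closed_in B G \<longleftrightarrow> (\<forall>u\<in>G. u \<inter> B \<noteq> {} \<longrightarrow> u \<subseteq> B)"

lemma restr_to_op:
  assumes "op_ext p \<subseteq> B"
  shows "op_valid (restr_to B G) p = op_valid G p" and "restr_to B (op_apply G p) = op_apply (restr_to B G) p"
proof -
  show "op_valid (restr_to B G) p = op_valid G p"
    using assms by (cases p) (auto simp: restr_to_def)
  show "restr_to B (op_apply G p) = op_apply (restr_to B G) p"
    using assms by (cases p) (auto simp: restr_to_def)
qed

lemma restr_to_run_seq:
  "\<forall>p\<in>set os. op_ext p \<subseteq> B \<Longrightarrow>
    valid_seq (restr_to B G) os = valid_seq G os \<and> restr_to B (run_seq G os) = run_seq (restr_to B G) os"
proof (induction os arbitrary: G)
  case Nil then show ?case by simp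
next
  case (Cons p os)
  then have pB: "op_ext p \<subseteq> B" by simp
  have IH: "valid_seq (restr_to B (op_apply G p)) os = valid_seq (op_apply G p) os \<and>
      restr_to B (run_seq (op_apply G p) os) = run_seq (restr_to B (op_apply G p)) os" using Cons by simp
  show ?case using IH restr_to_op[OF pB, of G] by simp
qed

lemma closed_in_op_apply: "closed_in B G \<Longrightarrow> op_ext p \<subseteq> B \<Longrightarrow> closed_in B (op_apply G p)"
  unfolding closed_in_def by (cases p) auto

lemma run_seq_invariants:
  "partition12 E G \<Longrightarrow> closed_in B G \<Longrightarrow> \<forall>p\<in>set os. op_ext p \<subseteq> B \<Longrightarrow> valid_seq G os \<Longrightarrow>
    partition12 E (run_seq G os) \<and> closed_in B (run_seq G os)"
proof (induction os arbitrary: G)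
  case Nil then show ?case by simp
next
  case (Cons p os)
  then show ?case using partition12_op_apply[of E G p] closed_in_op_apply[of B G p] by simp
qed

lemma restr_to_subset_if_block_of_eq:
  assumes p: "partition12 E G" and p': "partition12 E G'" and BE: "B \<subseteq> E"
    and eq: "\<forall>x\<in>B. block_of G x = block_of G' x"
  shows "restr_to B G \<subseteq> restr_to B G'"
proof
  fix u assume "u \<in> restr_to B G"
  then have u: "u \<in> G" "u \<subseteq> B" by (auto simp: restr_to_def)
  have "u \<noteq> {}" using partition12_card[OF p u(1)] by auto
  then obtain x where x: "x \<in> u" by blast
  have xE: "x \<in> E" using x u BE by blast
  have "u = block_of G x" using block_of_eq[OF p u(1) x] by simp
  also have "\<dots> = block_of G' x" using eq x u by blast
  finally have "u \<in> G'" using block_of_in[OF p' xE] by simp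
  then show "u \<in> restr_to B G'" using u by (simp add: restr_to_def)
qed

lemma restr_to_walk:
  assumes p: "partition12 E G" and C: "C = w ` {..<L}" and CE: "C \<subseteq> E"
    and f: "\<And>k. k < L \<Longrightarrow> f k < L \<and> w (f k) = partner G (w k)"
  shows "restr_to C G = map_vertices w (index_genome f L)"
proof (intro equalityI subsetI)
  fix u assume "u \<in> restr_to C G"
  then have u: "u \<in> G" "u \<subseteq> C" by (auto simp: restr_to_def)
  have "u \<noteq> {}" using partition12_card[OF p u(1)] by auto
  then obtain x where x: "x \<in> u" by auto
  then obtain k where k: "k < L" "x = w k" using u C by auto
  have "u = {w k, partner G (w k)}" using block_eq_partner[OF p _ u(1)] x k u CE by auto
  then have "u = w ` {k, f k}" using f[OF k(1)] by simp
  moreover have "{k, f k} \<in> index_genome f L" using k by (auto simp: index_genome_def)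
  ultimately show "u \<in> map_vertices w (index_genome f L)" unfolding map_vertices_def by blast
next
  fix u assume "u \<in> map_vertices w (index_genome f L)"
  then obtain k where k: "k < L" "u = w ` {k, f k}" by (auto simp: map_vertices_def index_genome_def)
  then have uu: "u = {w k, partner G (w k)}" using f by simp
  have wk: "w k \<in> E" using k C CE by auto
  have "u \<in> G" using uu block_of_partner[OF p wk] block_of_in[OF p wk] by simp
  moreover have "u \<subseteq> C"
  proof -
    have "partner G (w k) \<in> w ` {..<L}" using f[OF k(1)] by (metis imageI lessThan_iff)
    then show ?thesis using uu C k by auto
  qed
  ultimately show "u \<in> restr_to C G" by (simp add: restr_to_def)
qed

lemma rtrancl_closed:
  "(t, y) \<in> r\<^sup>* \<Longrightarrow> t \<in> S \<Longrightarrow> (\<And>x y. x \<in> S \<Longrightarrow> (x, y) \<in> r \<Longrightarrow> y \<in> S) \<Longrightarrow> y \<in> S"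
  by (induction rule: rtrancl_induct) auto

locale genome_pair =
  fixes E :: "'e set" and G1 G2 :: "'e set set"
  assumes p1: "partition12 E G1" and p2: "partition12 E G2" and fin: "finite E"
begin

definition partner_on :: "bool \<Rightarrow> 'e \<Rightarrow> 'e" where "partner_on b = (if b then partner G1 else partner G2)"

lemma partner_on_in: "x \<in> E \<Longrightarrow> partner_on b x \<in> E"
  using partner_in[OF p1] partner_in[OF p2] by (auto simp: partner_on_def)

lemma partner_on_partner_on: "x \<in> E \<Longrightarrow> partner_on b (partner_on b x) = x"
  using partner_partner[OF p1] partner_partner[OF p2] by (auto simp: partner_on_def)

lemma link_iff: "x \<in> E \<Longrightarrow> ((x, y) \<in> link G1 G2) = (y = x \<or> y = partner G1 x \<or> y = partner G2 x)"
proof -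
  assume x: "x \<in> E"
  have "((x, y) \<in> link G1 G2) = (y \<in> block_of G1 x \<or> y \<in> block_of G2 x)"
  proof
    assume "(x, y) \<in> link G1 G2"
    then obtain u where u: "u \<in> G1 \<or> u \<in> G2" "x \<in> u" "y \<in> u" unfolding link_def by blast
    then show "y \<in> block_of G1 x \<or> y \<in> block_of G2 x"
      using block_of_eq[OF p1, of u x] block_of_eq[OF p2, of u x] by blast
  next
    assume "y \<in> block_of G1 x \<or> y \<in> block_of G2 x"
    then show "(x, y) \<in> link G1 G2"
      using block_of_in[OF p1 x] block_of_in[OF p2 x] unfolding link_def by blast
  qed
  then show ?thesis using block_of_partner[OF p1 x] block_of_partner[OF p2 x] by auto
qed

lemma link_in_E: "(x, y) \<in> link G1 G2 \<Longrightarrow> x \<in> E \<and> y \<in> E"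
proof -
  assume "(x, y) \<in> link G1 G2"
  then obtain u where "u \<in> G1 \<or> u \<in> G2" "x \<in> u" "y \<in> u" unfolding link_def by blast
  then show ?thesis using partition12_subset[OF p1] partition12_subset[OF p2] by blast
qed

lemma link_sym: "(x, y) \<in> link G1 G2 \<Longrightarrow> (y, x) \<in> link G1 G2"
  unfolding link_def by blast

lemma rtrancl_link_sym: "(x, y) \<in> (link G1 G2)\<^sup>* \<Longrightarrow> (y, x) \<in> (link G1 G2)\<^sup>*"
proof (induction rule: rtrancl_induct)
  case base then show ?case by simp
next
  case (step y z)
  then show ?case using link_sym by (meson converse_rtrancl_into_rtrancl)
qed

lemma link_partner_on: "x \<in> E \<Longrightarrow> (x, partner_on b x) \<in> link G1 G2"
  using link_iff by (auto simp: partner_on_def)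

lemma link_block_of: "y \<in> E \<Longrightarrow> z \<in> block_of G1 y \<or> z \<in> block_of G2 y \<Longrightarrow> (y, z) \<in> link G1 G2"
  using block_of_in[OF p1] block_of_in[OF p2] unfolding link_def by blast

lemma component_eq: "t \<in> (link G1 G2)\<^sup>* `` {x0} \<Longrightarrow> (link G1 G2)\<^sup>* `` {t} = (link G1 G2)\<^sup>* `` {x0}"
  using rtrancl_link_sym by (auto intro: rtrancl_trans)

lemma component_subset_E: "x0 \<in> E \<Longrightarrow> (link G1 G2)\<^sup>* `` {x0} \<subseteq> E"
proof
  fix y assume "x0 \<in> E" "y \<in> (link G1 G2)\<^sup>* `` {x0}"
  then have "(x0, y) \<in> (link G1 G2)\<^sup>*" by simp
  then show "y \<in> E" using \<open>x0 \<in> E\<close> by (rule rtrancl_closed) (use link_in_E in blast)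
qed

fun walk :: "'e \<Rightarrow> bool \<Rightarrow> nat \<Rightarrow> 'e" where
  "walk t s 0 = t"
| "walk t s (Suc k) = partner_on (side s k) (walk t s k)"

lemma walk_in: "t \<in> E \<Longrightarrow> walk t s k \<in> E"
  by (induction k) (auto intro: partner_on_in)

lemma walk_Suc_back: "t \<in> E \<Longrightarrow> partner_on (side s k) (walk t s (Suc k)) = walk t s k"
  using partner_on_partner_on[OF walk_in] by simp

lemma walk_reachable: "t \<in> E \<Longrightarrow> walk t s k \<in> (link G1 G2)\<^sup>* `` {t}"
proof (induction k)
  case 0 then show ?case by simp
next
  case (Suc k)
  then have "(t, walk t s k) \<in> (link G1 G2)\<^sup>*" by simp
  moreover have "(walk t s k, walk t s (Suc k)) \<in> link G1 G2" using link_partner_on walk_in Suc by simp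
  ultimately show ?case by (simp add: rtrancl_into_rtrancl)
qed

definition walk_len :: "'e \<Rightarrow> bool \<Rightarrow> nat" where
  "walk_len t s = (LEAST j. \<exists>i<j. walk t s i = walk t s j)"

lemma walk_repeats: assumes "t \<in> E" shows "\<exists>j. \<exists>i<j. walk t s i = walk t s j"
proof (rule ccontr)
  assume na: "\<not> ?thesis"
  have "inj_on (walk t s) {..card E}"
  proof (rule inj_onI)
    fix a b assume "walk t s a = walk t s b"
    then show "a = b" using na by (metis linorder_neqE_nat)
  qed
  then have "card (walk t s ` {..card E}) = Suc (card E)" by (simp add: card_image)
  moreover have "walk t s ` {..card E} \<subseteq> E" using walk_in[OF assms] by auto
  then have "card (walk t s ` {..card E}) \<le> card E" by (rule card_mono[OF fin])
  ultimately show False by simp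
qed

lemma walk_len_repeats: assumes "t \<in> E" shows "\<exists>i<walk_len t s. walk t s i = walk t s (walk_len t s)"
  unfolding walk_len_def by (rule LeastI_ex) (rule walk_repeats[OF assms])

lemma inj_on_walk: "t \<in> E \<Longrightarrow> inj_on (walk t s) {..<walk_len t s}"
proof (rule inj_onI, rule ccontr)
  fix a b assume t: "t \<in> E" and a: "a \<in> {..<walk_len t s}" and b: "b \<in> {..<walk_len t s}" and e: "walk t s a = walk t s b" and ne: "a \<noteq> b"
  show False
  proof (cases "a < b")
    case True
    have "\<exists>i<b. walk t s i = walk t s b" using True e by blast
    then have "walk_len t s \<le> b" unfolding walk_len_def by (rule Least_le)
    then show False using b by simp
  next
    case False
    then have "b < a" using ne by simp
    then have "\<exists>i<a. walk t s i = walk t s a" using e by metis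
    then have "walk_len t s \<le> a" unfolding walk_len_def by (rule Least_le)
    then show False using a by simp
  qed
qed

lemma walk_len_pos: "t \<in> E \<Longrightarrow> 0 < walk_len t s"
  using walk_len_repeats[of t s] by auto

lemma walk_repeat_Suc:
  assumes t: "t \<in> E" and i: "i = Suc i'" "i < walk_len t s" and e: "walk t s i = walk t s (walk_len t s)"
  shows "Suc i = walk_len t s"
proof (rule ccontr)
  assume ne: "Suc i \<noteq> walk_len t s"
  obtain L' where L: "walk_len t s = Suc L'" using walk_len_pos[OF t, of s] by (cases "walk_len t s") auto
  have iL: "i < L'" using i ne L by simp
  have inj: "inj_on (walk t s) {..<walk_len t s}" by (rule inj_on_walk[OF t])
  have w1: "walk t s i' = partner_on (side s i') (walk t s (walk_len t s))" using walk_Suc_back[OF t, of s i'] e i by simp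
  have w2: "walk t s L' = partner_on (side s L') (walk t s (walk_len t s))" using walk_Suc_back[OF t, of s L'] L by simp
  show False
  proof (cases "side s L' = side s i'")
    case True
    then have "walk t s L' = walk t s i'" using w1 w2 by simp
    then have "L' = i'" using inj L iL i by (auto simp: inj_on_def)
    then show False using iL i by simp
  next
    case False
    then have "side s L' = side s i" using i by auto
    then have "walk t s L' = walk t s (Suc i)" using w2 e by simp
    moreover have "Suc i < walk_len t s" using iL L by simp
    ultimately have "L' = Suc i" using inj L by (auto simp: inj_on_def)
    then have "side s L' = side s i'" using i by simp
    then show False using False by simp
  qed
qed

lemma walk_path_end:
  assumes t: "t \<in> E" and fx: "partner_on (\<not> s) t = t"
  shows "walk t s (walk_len t s) = walk t s (walk_len t s - 1)"
proof -
  obtain i where i: "i < walk_len t s" "walk t s i = walk t s (walk_len t s)" using walk_len_repeats[OF t] by blast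
  obtain L' where L: "walk_len t s = Suc L'" using walk_len_pos[OF t, of s] by (cases "walk_len t s") auto
  have inj: "inj_on (walk t s) {..<walk_len t s}" by (rule inj_on_walk[OF t])
  show ?thesis
  proof (cases i)
    case (Suc i')
    then have "Suc i = walk_len t s" using walk_repeat_Suc[OF t Suc i(1) i(2)] by simp
    then have "walk_len t s - 1 = i" by simp
    then show ?thesis using i(2) by simp
  next
    case 0
    then have e: "walk t s (walk_len t s) = t" using i by simp
    have "L' = 0"
    proof (rule ccontr)
      assume L0: "L' \<noteq> 0"
      have w: "walk t s L' = partner_on (side s L') t" using walk_Suc_back[OF t, of s L'] L e by simp
      show False
      proof (cases "side s L' = s")
        case False
        then have "walk t s L' = walk t s 0" using w fx by simp
        then have "L' = 0" using inj L by (auto simp: inj_on_def)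
        then show False using L0 by simp
      next
        case True
        then have "walk t s L' = walk t s 1" using w by simp
        show False
        proof (cases "L' = 1")
          case True then show False using \<open>side s L' = s\<close> by simp
        next
          case False
          then have "L' = 1" using \<open>walk t s L' = walk t s 1\<close> inj L L0 by (auto simp: inj_on_def)
          then show False using False by simp
        qed
      qed
    qed
    then show ?thesis using e L by simp
  qed
qed

lemma walk_cycle_end:
  assumes t: "t \<in> E" and nofix: "\<And>k b. partner_on b (walk t s k) \<noteq> walk t s k"
  shows "walk t s (walk_len t s) = t \<and> even (walk_len t s) \<and> partner_on (\<not> s) t = walk t s (walk_len t s - 1)"
proof -
  obtain i where i: "i < walk_len t s" "walk t s i = walk t s (walk_len t s)" using walk_len_repeats[OF t] by blast
  obtain L' where L: "walk_len t s = Suc L'" using walk_len_pos[OF t, of s] by (cases "walk_len t s") auto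
  have inj: "inj_on (walk t s) {..<walk_len t s}" by (rule inj_on_walk[OF t])
  have i0: "i = 0"
  proof (rule ccontr)
    assume "i \<noteq> 0"
    then obtain i' where "i = Suc i'" by (cases i) auto
    then have "Suc i = walk_len t s" using walk_repeat_Suc[OF t _ i(1) i(2)] by simp
    have "partner_on (side s i) (walk t s i) = walk t s (Suc i)" by simp
    also have "\<dots> = walk t s i" using i(2) \<open>Suc i = walk_len t s\<close> by simp
    finally show False using nofix by blast
  qed
  then have e: "walk t s (walk_len t s) = t" using i by simp
  have L0: "L' \<noteq> 0"
  proof
    assume "L' = 0"
    then have "partner_on s t = t" using e L by simp
    then show False using nofix[of s 0] by simp
  qed
  have w: "walk t s L' = partner_on (side s L') t" using walk_Suc_back[OF t, of s L'] L e by simp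
  have sdL: "side s L' = (\<not> s)"
  proof (rule ccontr)
    assume "side s L' \<noteq> (\<not> s)"
    then have "side s L' = s" by simp
    then have "walk t s L' = walk t s 1" using w by simp
    show False
    proof (cases "L' = 1")
      case True then show False using \<open>side s L' = s\<close> by simp
    next
      case False
      then have "L' = 1" using \<open>walk t s L' = walk t s 1\<close> inj L L0 by (auto simp: inj_on_def)
      then show False using False by simp
    qed
  qed
  then have "odd L'" by (auto simp: side_def split: if_splits)
  then have "even (walk_len t s)" using L by simp
  moreover have "partner_on (\<not> s) t = walk t s (walk_len t s - 1)" using w sdL L by simp
  ultimately show ?thesis using e by simp
qed

lemma walk_path_partner:
  assumes t: "t \<in> E" and fx: "partner_on (\<not> s) t = t" and k: "k < walk_len t s"
  shows "path_partner (walk_len t s) s b k < walk_len t s \<and> walk t s (path_partner (walk_len t s) s b k) = partner_on b (walk t s k)"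
proof -
  let ?L = "walk_len t s"
  have pe: "walk t s ?L = walk t s (?L - 1)" by (rule walk_path_end[OF t fx])
  show ?thesis
  proof (cases "side s k = b")
    case True
    show ?thesis
    proof (cases "Suc k < ?L")
      case True then show ?thesis using \<open>side s k = b\<close> by (simp add: path_partner_def)
    next
      case False
      then have kL: "Suc k = ?L" using k by simp
      have "partner_on b (walk t s k) = walk t s (Suc k)" using \<open>side s k = b\<close> by simp
      also have "\<dots> = walk t s k" using pe kL by (metis diff_Suc_1)
      finally have "partner_on b (walk t s k) = walk t s k" .
      then show ?thesis using True False k by (simp add: path_partner_def)
    qed
  next
    case False
    show ?thesis
    proof (cases k)
      case 0
      then have "b = (\<not> s)" using False by simp
      then show ?thesis using 0 fx k by (simp add: path_partner_def)
    next
      case (Suc k')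
      have "partner_on (side s k') (walk t s (Suc k')) = walk t s k'" by (rule walk_Suc_back[OF t])
      moreover have "side s k' = b" using False Suc by simp
      ultimately show ?thesis using Suc False k by (simp add: path_partner_def)
    qed
  qed
qed

lemma walk_cycle_partner:
  assumes t: "t \<in> E" and nofix: "\<And>k b. partner_on b (walk t s k) \<noteq> walk t s k" and k: "k < walk_len t s"
  shows "cycle_partner (walk_len t s) s b k < walk_len t s \<and> walk t s (cycle_partner (walk_len t s) s b k) = partner_on b (walk t s k)"
proof -
  let ?L = "walk_len t s"
  have ce: "walk t s ?L = t" "partner_on (\<not> s) t = walk t s (?L - 1)" using walk_cycle_end[OF t nofix] by auto
  have L0: "0 < ?L" by (rule walk_len_pos[OF t])
  show ?thesis
  proof (cases "side s k = b")
    case True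
    show ?thesis
    proof (cases "Suc k < ?L")
      case True then show ?thesis using \<open>side s k = b\<close> by (simp add: cycle_partner_def)
    next
      case False
      then have kL: "Suc k = ?L" using k by simp
      have "partner_on b (walk t s k) = walk t s (Suc k)" using \<open>side s k = b\<close> by simp
      also have "\<dots> = t" using kL ce by simp
      finally show ?thesis using True False k L0 by (simp add: cycle_partner_def)
    qed
  next
    case False
    show ?thesis
    proof (cases k)
      case 0
      then have "b = (\<not> s)" using False by simp
      then show ?thesis using 0 ce L0 by (simp add: cycle_partner_def)
    next
      case (Suc k')
      have "partner_on (side s k') (walk t s (Suc k')) = walk t s k'" by (rule walk_Suc_back[OF t])
      moreover have "side s k' = b" using False Suc by simp
      ultimately show ?thesis using Suc False k by (simp add: cycle_partner_def)
    qed
  qed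
qed

lemma component_eq_walk:
  assumes t: "t \<in> E" and f: "\<And>k b. k < walk_len t s \<Longrightarrow> f b k < walk_len t s \<and> walk t s (f b k) = partner_on b (walk t s k)"
  shows "(link G1 G2)\<^sup>* `` {t} = walk t s ` {..<walk_len t s}"
proof (intro equalityI subsetI)
  fix y assume "y \<in> (link G1 G2)\<^sup>* `` {t}"
  then have ty: "(t, y) \<in> (link G1 G2)\<^sup>*" by simp
  show "y \<in> walk t s ` {..<walk_len t s}"
  proof (rule rtrancl_closed[OF ty])
    show "t \<in> walk t s ` {..<walk_len t s}" using walk_len_pos[OF t, of s] by (metis imageI lessThan_iff walk.simps(1))
  next
    fix x z assume x: "x \<in> walk t s ` {..<walk_len t s}" and xz: "(x, z) \<in> link G1 G2"
    then obtain k where k: "k < walk_len t s" "x = walk t s k" by auto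
    have xE: "x \<in> E" using k walk_in[OF t] by simp
    have "z = x \<or> z = partner_on True x \<or> z = partner_on False x" using link_iff[OF xE] xz by (simp add: partner_on_def)
    then show "z \<in> walk t s ` {..<walk_len t s}" using f[OF k(1)] k x by (metis imageI lessThan_iff)
  qed
next
  fix y assume "y \<in> walk t s ` {..<walk_len t s}"
  then show "y \<in> (link G1 G2)\<^sup>* `` {t}" using walk_reachable[OF t] by auto
qed

lemma component_subset_closed:
  assumes c1: "closed_in B G1" and c2: "closed_in B G2" and xB: "x \<in> B" and BE: "B \<subseteq> E"
  shows "(link G1 G2)\<^sup>* `` {x} \<subseteq> B"
proof
  fix y assume "y \<in> (link G1 G2)\<^sup>* `` {x}"
  then have "(x, y) \<in> (link G1 G2)\<^sup>*" by simp
  then show "y \<in> B"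
  proof (rule rtrancl_closed)
    show "x \<in> B" by (rule xB)
    fix a b assume a: "a \<in> B" and ab: "(a, b) \<in> link G1 G2"
    then obtain u where u: "u \<in> G1 \<or> u \<in> G2" "a \<in> u" "b \<in> u" unfolding link_def by blast
    then have "u \<subseteq> B" using c1 c2 a unfolding closed_in_def by blast
    then show "b \<in> B" using u by blast
  qed
qed

lemma closed_in_component:
  assumes "B = (link G1 G2)\<^sup>* `` {t}"
  shows "closed_in B G1" "closed_in B G2"
proof -
  have "\<And>u. u \<in> G1 \<or> u \<in> G2 \<Longrightarrow> u \<inter> B \<noteq> {} \<Longrightarrow> u \<subseteq> B"
  proof -
    fix u assume u: "u \<in> G1 \<or> u \<in> G2" "u \<inter> B \<noteq> {}"
    then obtain y where y: "y \<in> u" "y \<in> B" by blast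
    show "u \<subseteq> B"
    proof
      fix z assume "z \<in> u"
      then have "(y, z) \<in> link G1 G2" using u y unfolding link_def by blast
      then show "z \<in> B" using y assms by (auto intro: rtrancl_into_rtrancl)
    qed
  qed
  then show "closed_in B G1" "closed_in B G2" unfolding closed_in_def by auto
qed

lemma block_of_subset_component:
  assumes "y \<in> (link G1 G2)\<^sup>* `` {x}" "y \<in> E"
  shows "block_of G1 y \<subseteq> (link G1 G2)\<^sup>* `` {x}" "block_of G2 y \<subseteq> (link G1 G2)\<^sup>* `` {x}"
proof -
  have "(x, z) \<in> (link G1 G2)\<^sup>*" if "z \<in> block_of G1 y \<or> z \<in> block_of G2 y" for z
    using assms(1) link_block_of[OF assms(2) that] by (simp add: rtrancl_into_rtrancl)
  then show "block_of G1 y \<subseteq> (link G1 G2)\<^sup>* `` {x}" "block_of G2 y \<subseteq> (link G1 G2)\<^sup>* `` {x}"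
    by auto
qed

text \<open>A crown of size 1 may have 2 or 3 edges by the definition of its size; the latter is
  impossible since without telomeres its vertices have two extremities each.\<close>

lemma trivial_crown_block_of:
  assumes xE: "x \<in> E" and C: "trivial_crown G1 G2 ((link G1 G2)\<^sup>* `` {x})" (is "trivial_crown G1 G2 ?C")
  shows "block_of G1 x = ?C" "block_of G2 x = ?C"
proof -
  have finC: "finite ?C" using component_subset_E[OF xE] fin by (rule finite_subset)
  have no_tel: "card u = 2" if "u \<in> G1 \<or> u \<in> G2" "u \<subseteq> ?C" for u
  proof -
    have "deg1_vertices G1 G2 ?C = {}" using C unfolding trivial_crown_def is_crown_def by simp
    then have "card u \<noteq> 1" using that unfolding deg1_vertices_def by auto
    then show ?thesis using that partition12_card[OF p1] partition12_card[OF p2] by blast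
  qed
  have s: "block_of G1 x \<subseteq> ?C" "block_of G2 x \<subseteq> ?C" using block_of_subset_component[of x x] xE by auto
  have c: "card (block_of G1 x) = 2" "card (block_of G2 x) = 2"
    using no_tel s block_of_in[OF p1 xE] block_of_in[OF p2 xE] by auto
  have "card ?C \<noteq> 3"
  proof
    assume c3: "card ?C = 3"
    then have "block_of G1 x \<noteq> ?C" using c(1) by auto
    then obtain z where z: "z \<in> ?C" "z \<notin> block_of G1 x" using s(1) by blast
    have zE: "z \<in> E" using z component_subset_E[OF xE] by blast
    have w: "block_of G1 z \<in> G1" "z \<in> block_of G1 z" using block_of_in[OF p1 zE] by auto
    have sw: "block_of G1 z \<subseteq> ?C" using block_of_subset_component[OF z(1) zE] by simp
    have cz: "card (block_of G1 z) = 2" using no_tel[OF _ sw] w(1) by blast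
    have "block_of G1 x \<inter> block_of G1 z = {}"
      using partition12_unique[OF p1 _ w(1)] block_of_in[OF p1 xE] z(2) w(2) by blast
    then have "card (block_of G1 x \<union> block_of G1 z) = card (block_of G1 x) + card (block_of G1 z)"
      by (intro card_Un_disjoint) (use c(1) cz in \<open>auto intro: card_ge_0_finite\<close>)
    then have "card (block_of G1 x \<union> block_of G1 z) = 4" using c(1) cz by simp
    moreover have "card (block_of G1 x \<union> block_of G1 z) \<le> card ?C" using s(1) sw finC by (intro card_mono) auto
    ultimately show False using c3 by simp
  qed
  then have "card ?C = 2" using C unfolding trivial_crown_def comp_size_def by arith
  then show "block_of G1 x = ?C" "block_of G2 x = ?C" using card_subset_eq[OF finC] s c by auto
qed

lemma block_of_eq_if_sorted:
  assumes c1: "closed_in B G1" and c2: "closed_in B G2" and BE: "B \<subseteq> E"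
    and triv: "\<forall>C\<in>components G1 G2. C \<subseteq> B \<longrightarrow> trivial_comp G1 G2 C"
    and xB: "x \<in> B"
  shows "block_of G1 x = block_of G2 x"
proof -
  let ?C = "(link G1 G2)\<^sup>* `` {x}"
  have xE: "x \<in> E" using xB BE by blast
  have "x \<in> \<Union>G1" using p1 xE by (simp add: partition12_def)
  then have "?C \<in> components G1 G2" unfolding components_def by (intro CollectI exI[of _ x]) simp
  moreover have "?C \<subseteq> B" by (rule component_subset_closed[OF c1 c2 xB BE])
  ultimately have "trivial_comp G1 G2 ?C" using triv by blast
  then have "card ?C = 1 \<or> trivial_crown G1 G2 ?C" unfolding trivial_comp_def by blast
  then show ?thesis
  proof
    assume "card ?C = 1"
    then obtain y where "?C = {y}" by (auto simp: card_1_singleton_iff)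
    moreover have "x \<in> ?C" by simp
    ultimately have C: "?C = {x}" by simp
    have "block_of G1 x \<subseteq> {x}" "block_of G2 x \<subseteq> {x}"
      using block_of_subset_component[of x x] xE unfolding C by auto
    then show ?thesis using block_of_in[OF p1 xE] block_of_in[OF p2 xE] by blast
  next
    assume "trivial_crown G1 G2 ?C"
    then show ?thesis using trivial_crown_block_of[OF xE] by simp
  qed
qed

lemma component_eq_common_block:
  assumes u: "u \<in> G1" "u \<in> G2" and x: "x \<in> u"
  shows "(link G1 G2)\<^sup>* `` {x} = u"
proof (intro equalityI subsetI)
  fix y assume "y \<in> (link G1 G2)\<^sup>* `` {x}"
  then have "(x, y) \<in> (link G1 G2)\<^sup>*" by simp
  then show "y \<in> u"
  proof (rule rtrancl_closed)
    show "x \<in> u" by (rule x)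
    fix a b assume a: "a \<in> u" and "(a, b) \<in> link G1 G2"
    then obtain w where w: "w \<in> G1 \<or> w \<in> G2" "a \<in> w" "b \<in> w" unfolding link_def by blast
    then have "w = u" using partition12_unique[OF p1 _ u(1)] partition12_unique[OF p2 _ u(2)] a by blast
    then show "b \<in> u" using w by simp
  qed
next
  fix y assume "y \<in> u"
  then have "(x, y) \<in> link G1 G2" using u x unfolding link_def by blast
  then show "y \<in> (link G1 G2)\<^sup>* `` {x}" by (simp add: r_into_rtrancl)
qed

lemma trivial_comp_common_block:
  assumes u: "u \<in> G1" "u \<in> G2"
  shows "trivial_comp G1 G2 u"
proof -
  have only_u: "v = u" if "v \<in> G1 \<or> v \<in> G2" "v \<subseteq> u" for v
  proof -
    have "v \<noteq> {}" using that partition12_card[OF p1] partition12_card[OF p2] by fastforce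
    then obtain y where "y \<in> v" by blast
    then show "v = u" using that partition12_unique[OF p1 _ u(1)] partition12_unique[OF p2 _ u(2)] by blast
  qed
  consider "card u = 1" | "card u = 2" using partition12_card[OF p1 u(1)] by blast
  then show ?thesis
  proof cases
    case 1
    then have "deg1_vertices G1 G2 u = {Inl u, Inr u}"
      unfolding deg1_vertices_def using only_u u by auto
    then show ?thesis using 1 unfolding trivial_comp_def N_shaped_def is_path_comp_def by simp
  next
    case 2
    then have "deg1_vertices G1 G2 u = {}" unfolding deg1_vertices_def using only_u by fastforce
    then show ?thesis using 2 unfolding trivial_comp_def trivial_crown_def is_crown_def comp_size_def by simp
  qed
qed

lemma sorted_if_restr_to_eq:
  assumes c1: "closed_in B G1" and eq: "restr_to B G1 = restr_to B G2"
  shows "\<forall>C\<in>components G1 G2. C \<subseteq> B \<longrightarrow> trivial_comp G1 G2 C"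
proof (intro ballI impI)
  fix C assume "C \<in> components G1 G2" and CB: "C \<subseteq> B"
  then obtain x where x: "x \<in> \<Union>G1" "C = (link G1 G2)\<^sup>* `` {x}" unfolding components_def by blast
  have xE: "x \<in> E" using x(1) p1 unfolding partition12_def by blast
  have u1: "block_of G1 x \<in> G1" "x \<in> block_of G1 x" using block_of_in[OF p1 xE] by auto
  have "block_of G1 x \<subseteq> B" using c1 u1 x CB unfolding closed_in_def by blast
  then have u2: "block_of G1 x \<in> G2" using eq u1 unfolding restr_to_def by blast
  have "C = block_of G1 x" using component_eq_common_block[OF u1(1) u2 u1(2)] x(2) by simp
  then show "trivial_comp G1 G2 C" using trivial_comp_common_block[OF u1(1) u2] by simp
qed

lemma sorted_iff_restr_to_eq:
  assumes c1: "closed_in B G1" and c2: "closed_in B G2" and BE: "B \<subseteq> E"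
  shows "(\<forall>C\<in>components G1 G2. C \<subseteq> B \<longrightarrow> trivial_comp G1 G2 C) \<longleftrightarrow> restr_to B G1 = restr_to B G2"
proof
  assume "\<forall>C\<in>components G1 G2. C \<subseteq> B \<longrightarrow> trivial_comp G1 G2 C"
  then have "\<forall>x\<in>B. block_of G1 x = block_of G2 x" using block_of_eq_if_sorted[OF c1 c2 BE] by blast
  then show "restr_to B G1 = restr_to B G2"
    using restr_to_subset_if_block_of_eq[OF p1 p2 BE] restr_to_subset_if_block_of_eq[OF p2 p1 BE]
    by (metis subset_antisym)
next
  assume "restr_to B G1 = restr_to B G2"
  then show "\<forall>C\<in>components G1 G2. C \<subseteq> B \<longrightarrow> trivial_comp G1 G2 C" by (rule sorted_if_restr_to_eq[OF c1])
qed

end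

lemma sorted_after_iff:
  assumes p1: "partition12 E G1" and p2: "partition12 E G2" and fin: "finite E" and BE: "B \<subseteq> E"
    and c1: "closed_in B G1" and c2: "closed_in B G2"
    and os: "\<forall>p\<in>set os. op_ext p \<subseteq> B" "valid_seq G1 os"
  shows "(\<forall>C \<in> components (run_seq G1 os) G2. C \<subseteq> B \<longrightarrow> trivial_comp (run_seq G1 os) G2 C)
     \<longleftrightarrow> run_seq (restr_to B G1) os = restr_to B G2"
proof -
  have inv: "partition12 E (run_seq G1 os)" "closed_in B (run_seq G1 os)"
    using run_seq_invariants[OF p1 c1 os] by auto
  interpret after: genome_pair E "run_seq G1 os" G2 using inv(1) p2 fin by unfold_locales auto
  show ?thesis using after.sorted_iff_restr_to_eq[OF inv(2) c2 BE] restr_to_run_seq[OF os(1)] by simp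
qed

lemma nST_single_eq_n_scenarios:
  assumes p1: "partition12 E G1" and p2: "partition12 E G2" and fin: "finite E" and BE: "B \<subseteq> E"
    and c1: "closed_in B G1" and c2: "closed_in B G2"
  shows "nST_single G1 G2 B = n_scenarios (restr_to B G2) B (restr_to B G1) (d_comp G1 G2 B)"
proof -
  have "(length os = d_comp G1 G2 B \<and> (\<forall>p\<in>set os. op_ext p \<subseteq> B) \<and> valid_seq G1 os
      \<and> (\<forall>C \<in> components (run_seq G1 os) G2. C \<subseteq> B \<longrightarrow> trivial_comp (run_seq G1 os) G2 C))
    \<longleftrightarrow> (length os = d_comp G1 G2 B \<and> (\<forall>p\<in>set os. op_ext p \<subseteq> B) \<and> valid_seq (restr_to B G1) os
      \<and> run_seq (restr_to B G1) os = restr_to B G2)" for os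
    using sorted_after_iff[OF assms, of os] restr_to_run_seq[of os B G1] by blast
  then show ?thesis unfolding nST_single_def n_scenarios_def scenarios_def by simp
qed

context genome_pair
begin

lemma nST_single_walk:
  assumes t: "t \<in> E" and B: "B = (link G1 G2)\<^sup>* `` {t}"
    and f: "\<And>k b. k < walk_len t s \<Longrightarrow> f b k < walk_len t s \<and> walk t s (f b k) = partner_on b (walk t s k)"
  shows "nST_single G1 G2 B = n_scenarios (index_genome (f False) (walk_len t s)) {..<walk_len t s} (index_genome (f True) (walk_len t s)) (d_comp G1 G2 B)
     \<and> card B = walk_len t s"
proof -
  let ?L = "walk_len t s" and ?w = "walk t s"
  have Bw: "B = ?w ` {..<?L}" using component_eq_walk[OF t f] B by simp
  have inj: "inj_on ?w {..<?L}" by (rule inj_on_walk[OF t])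
  have BE: "B \<subseteq> E" using Bw walk_in[OF t] by auto
  have r1: "restr_to B G1 = map_vertices ?w (index_genome (f True) ?L)"
    by (rule restr_to_walk[OF p1 Bw BE]) (use f in \<open>auto simp: partner_on_def\<close>)
  have r2: "restr_to B G2 = map_vertices ?w (index_genome (f False) ?L)"
    by (rule restr_to_walk[OF p2 Bw BE]) (use f in \<open>auto simp: partner_on_def\<close>)
  have "nST_single G1 G2 B = n_scenarios (restr_to B G2) B (restr_to B G1) (d_comp G1 G2 B)"
    by (rule nST_single_eq_n_scenarios[OF p1 p2 fin BE closed_in_component[OF B]])
  also have "\<dots> = n_scenarios (map_vertices ?w (index_genome (f False) ?L)) (?w ` {..<?L}) (map_vertices ?w (index_genome (f True) ?L)) (d_comp G1 G2 B)"
    using r1 r2 Bw by simp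
  also have "\<dots> = n_scenarios (index_genome (f False) ?L) {..<?L} (index_genome (f True) ?L) (d_comp G1 G2 B)"
    by (rule n_scenarios_map[OF inj]) (auto intro!: index_genome_Pow dest: f)
  finally show ?thesis using Bw inj by (simp add: card_image)
qed

lemma nST_single_path:
  assumes t: "t \<in> E" and B: "B = (link G1 G2)\<^sup>* `` {t}" and fx: "partner_on (\<not> s) t = t"
  shows "nST_single G1 G2 B = n_scenarios (index_genome (path_partner (walk_len t s) s False) (walk_len t s)) {..<walk_len t s}
      (index_genome (path_partner (walk_len t s) s True) (walk_len t s)) (d_comp G1 G2 B) \<and> card B = walk_len t s"
  using nST_single_walk[OF t B, of s "path_partner (walk_len t s) s"] walk_path_partner[OF t fx] by blast

lemma nST_single_cycle:
  assumes t: "t \<in> E" and B: "B = (link G1 G2)\<^sup>* `` {t}" and nofix: "\<And>k b. partner_on b (walk t s k) \<noteq> walk t s k"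
  shows "nST_single G1 G2 B = n_scenarios (index_genome (cycle_partner (walk_len t s) s False) (walk_len t s)) {..<walk_len t s}
      (index_genome (cycle_partner (walk_len t s) s True) (walk_len t s)) (d_comp G1 G2 B) \<and> card B = walk_len t s \<and> even (walk_len t s)"
  using nST_single_walk[OF t B, of s "cycle_partner (walk_len t s) s"] walk_cycle_partner[OF t nofix] walk_cycle_end[OF t nofix] by blast

lemma d_comp_path: "is_path_comp G1 G2 B \<Longrightarrow> d_comp G1 G2 B = comp_size B"
  unfolding is_path_comp_def d_comp_def trivial_crown_def nontrivial_crown_def is_crown_def by auto

lemma component_deg1_telomere:
  assumes x0: "x0 \<in> E" and B: "B = (link G1 G2)\<^sup>* `` {x0}" and v: "v \<in> deg1_vertices G1 G2 B"
  obtains t where "t \<in> E" "B = (link G1 G2)\<^sup>* `` {t}" "partner_on (isl v) t = t"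
proof -
  obtain u where u: "u \<in> (if isl v then G1 else G2)" "u \<subseteq> B" "card u = 1"
    using v unfolding deg1_vertices_def by auto
  then obtain t where ut: "u = {t}" by (auto simp: card_1_singleton_iff)
  have tE: "t \<in> E" using u(2) ut component_subset_E[OF x0] B by blast
  have "partner_on (isl v) t = t"
    using u(1) ut singleton_in_iff_partner[OF p1 tE] singleton_in_iff_partner[OF p2 tE]
    by (auto simp: partner_on_def split: if_splits)
  moreover have "B = (link G1 G2)\<^sup>* `` {t}" using component_eq u(2) ut B by simp
  ultimately show ?thesis using that tE by blast
qed

text \<open>The two ends of a path of odd length lie in different genomes.\<close>

lemma walk_odd_path_end:
  assumes t: "t \<in> E" and fx: "partner_on (\<not> s) t = t" and odd: "odd (walk_len t s)"
  shows "partner_on s (walk t s (walk_len t s - 1)) = walk t s (walk_len t s - 1)"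
proof -
  obtain L' where L: "walk_len t s = Suc L'" using walk_len_pos[OF t, of s] by (cases "walk_len t s") auto
  then have "side s L' = s" using odd by (simp add: side_def)
  then show ?thesis using walk_path_end[OF t fx] L by simp
qed

lemma nST_single_W:
  assumes x0: "x0 \<in> E" and B: "B = (link G1 G2)\<^sup>* `` {x0}" and W: "W_shaped G1 G2 B" and w1: "comp_size B \<ge> 1"
  shows "nST_single G1 G2 B = 2 ^ (comp_size B - 1)"
proof -
  obtain v where "v \<in> deg1_vertices G1 G2 B" "isl v"
    using W unfolding W_shaped_def is_path_comp_def by (metis card.empty ex_in_conv isl_def rangeE subsetD zero_neq_numeral)
  then obtain t where t: "t \<in> E" "B = (link G1 G2)\<^sup>* `` {t}" "partner_on (\<not> False) t = t"
    using component_deg1_telomere[OF x0 B] by (metis (full_types))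
  obtain w' where w: "comp_size B = Suc w'" using w1 by (cases "comp_size B") auto
  have "card B = 2 * Suc w'" "d_comp G1 G2 B = Suc w'"
    using W w d_comp_path unfolding W_shaped_def comp_size_def by auto
  then have "nST_single G1 G2 B = n_scenarios (W_target (Suc w')) {..<2 * Suc w'} (W_state (Suc w') 0 (Suc w')) (Suc w')"
    using nST_single_path[OF t] W_path_G1[of "Suc w'"] W_path_G2[of "Suc w'"] by simp
  also have "\<dots> = 2 ^ w'" by (rule n_scenarios_W) simp
  finally show ?thesis using w by simp
qed

lemma nST_single_M:
  assumes x0: "x0 \<in> E" and B: "B = (link G1 G2)\<^sup>* `` {x0}" and M: "M_shaped G1 G2 B" and m1: "comp_size B \<ge> 1"
  shows "nST_single G1 G2 B = 2 ^ (comp_size B - 1)"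
proof -
  obtain v where "v \<in> deg1_vertices G1 G2 B" "\<not> isl v"
    using M unfolding M_shaped_def is_path_comp_def by (metis card.empty ex_in_conv isl_def rangeE subsetD zero_neq_numeral sum.disc(2))
  then obtain t where t: "t \<in> E" "B = (link G1 G2)\<^sup>* `` {t}" "partner_on (\<not> True) t = t"
    using component_deg1_telomere[OF x0 B] by (metis (full_types))
  obtain m' where m: "comp_size B = Suc m'" using m1 by (cases "comp_size B") auto
  have "card B = 2 * Suc m'" "d_comp G1 G2 B = Suc m'"
    using M m d_comp_path unfolding M_shaped_def comp_size_def by auto
  then have "nST_single G1 G2 B = n_scenarios (M_target (Suc m')) {..<2 * Suc m'} (W_target (Suc m')) (Suc m')"
    using nST_single_path[OF t] M_path_G1[of "Suc m'"] M_path_G2[of "Suc m'"] by simp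
  also have "\<dots> = 2 ^ m'" by (rule n_scenarios_M) simp
  finally show ?thesis using m by simp
qed

lemma nST_single_N:
  assumes x0: "x0 \<in> E" and B: "B = (link G1 G2)\<^sup>* `` {x0}" and N: "N_shaped G1 G2 B"
  shows "nST_single G1 G2 B = 1"
proof -
  have odd: "odd (card B)" using N unfolding N_shaped_def by simp
  obtain v where "v \<in> deg1_vertices G1 G2 B"
    using N unfolding N_shaped_def is_path_comp_def by fastforce
  then obtain t0 where t0: "t0 \<in> E" "B = (link G1 G2)\<^sup>* `` {t0}" "partner_on (\<not> \<not> isl v) t0 = t0"
    using component_deg1_telomere[OF x0 B] by auto
  have G1_telomere: "\<exists>t\<in>B. partner_on True t = t"
  proof (cases "isl v")
    case True
    then show ?thesis using t0 by auto
  next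
    case False
    let ?e = "walk t0 True (walk_len t0 True - 1)"
    have fx: "partner_on (\<not> True) t0 = t0" using t0(3) False by simp
    have "odd (walk_len t0 True)" using nST_single_path[OF t0(1,2) fx] odd by simp
    then have "partner_on True ?e = ?e" by (rule walk_odd_path_end[OF t0(1) fx])
    moreover have "?e \<in> B" using walk_reachable[OF t0(1)] t0(2) by simp
    ultimately show ?thesis by blast
  qed
  then obtain t where t: "t \<in> E" "B = (link G1 G2)\<^sup>* `` {t}" "partner_on (\<not> False) t = t"
    using component_eq B component_subset_E[OF x0] by auto
  define n where "n = card B div 2"
  have "card B = 2 * n + 1" "d_comp G1 G2 B = n"
    using odd d_comp_path N unfolding n_def N_shaped_def comp_size_def by auto
  then have "nST_single G1 G2 B = n_scenarios (N_target n) {..<2 * n + 1} (N_state n 0) n"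
    using nST_single_path[OF t] N_path_G1[of n] N_path_G2[of n] by simp
  also have "\<dots> = 1" using n_scenarios_N_state[of 0 n n] by simp
  finally show ?thesis .
qed

lemma nST_single_crown:
  assumes x0: "x0 \<in> E" and B: "B = (link G1 G2)\<^sup>* `` {x0}" and C: "nontrivial_crown G1 G2 B"
  shows "nST_single G1 G2 B = comp_size B * 2 ^ (comp_size B - 1)"
proof -
  have BE: "B \<subseteq> E" using component_subset_E[OF x0] B by simp
  have d0: "deg1_vertices G1 G2 B = {}" using C unfolding nontrivial_crown_def is_crown_def by simp
  have nofix: "\<And>k b. partner_on b (walk x0 True k) \<noteq> walk x0 True k"
  proof
    fix k b assume e: "partner_on b (walk x0 True k) = walk x0 True k"
    let ?y = "walk x0 True k"
    have yB: "?y \<in> B" using walk_reachable[OF x0] B by simp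
    have yE: "?y \<in> E" using yB BE by blast
    show False
    proof (cases b)
      case True
      then have "{?y} \<in> G1" using e singleton_in_iff_partner[OF p1 yE] by (simp add: partner_on_def)
      then have "Inl {?y} \<in> deg1_vertices G1 G2 B" using yB unfolding deg1_vertices_def by auto
      then show False using d0 by simp
    next
      case False
      then have "{?y} \<in> G2" using e singleton_in_iff_partner[OF p2 yE] by (simp add: partner_on_def)
      then have "Inr {?y} \<in> deg1_vertices G1 G2 B" using yB unfolding deg1_vertices_def by auto
      then show False using d0 by simp
    qed
  qed
  note cc = nST_single_cycle[OF x0 B nofix]
  define c where "c = comp_size B"
  have cB: "card B = 2 * c" using cc c_def unfolding comp_size_def by auto
  have L: "walk_len x0 True = 2 * c" using cc cB by simp
  have "0 < c" using walk_len_pos[OF x0, of True] L by simp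
  moreover have "c \<noteq> 1" using C c_def unfolding nontrivial_crown_def by simp
  ultimately obtain c' where c: "c = Suc c'" "0 < c" by (cases c) auto
  have d: "d_comp G1 G2 B = Suc c" using C c_def unfolding d_comp_def nontrivial_crown_def trivial_crown_def by simp
  have "nST_single G1 G2 B = n_scenarios (crown_target c) {..<2 * c} (W_target c) (Suc c)"
    using cc L d crown_G1[OF c(2)] crown_G2[OF c(2)] by simp
  also have "\<dots> = c * 2 ^ c'" by (rule n_scenarios_crown[OF c(1)])
  finally show ?thesis using c c_def by simp
qed

end

lemma finite_UNIV_ext: "finite (UNIV :: ext set)"
proof -
  have "(UNIV :: ext set) = {Tail, Head}" using ext.exhaust by auto
  moreover have "finite {Tail, Head}" by simp
  ultimately show ?thesis by metis
qed

lemma genome_partition12: "genome X G \<Longrightarrow> partition12 (extremities X) G \<and> finite (extremities X)"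
  unfolding genome_def partition12_def extremities_def using finite_UNIV_ext by auto

theorem mainTheorem3:
  fixes X :: "'g set" and G1 G2 :: "'g extremity set set" and B :: "'g extremity set"
  assumes "genome X G1" and "genome X G2" and "B \<in> components G1 G2"
  shows "(N_shaped G1 G2 B \<longrightarrow> nST_single G1 G2 B = 1)
       \<and> (W_shaped G1 G2 B \<and> comp_size B \<ge> 1 \<longrightarrow> nST_single G1 G2 B = 2 ^ (comp_size B - 1))
       \<and> (M_shaped G1 G2 B \<and> comp_size B \<ge> 1 \<longrightarrow> nST_single G1 G2 B = 2 ^ (comp_size B - 1))
       \<and> (nontrivial_crown G1 G2 B \<longrightarrow>
            nST_single G1 G2 B = comp_size B * 2 ^ (comp_size B - 1))"
proof -
  have g1: "partition12 (extremities X) G1" "finite (extremities X)" using genome_partition12[OF assms(1)] by auto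
  have g2: "partition12 (extremities X) G2" using genome_partition12[OF assms(2)] by auto
  interpret tw: genome_pair "extremities X" G1 G2 using g1 g2 by unfold_locales auto
  obtain x0 where x0: "x0 \<in> \<Union>G1" "B = (link G1 G2)\<^sup>* `` {x0}"
    using assms(3) unfolding components_def by blast
  have x0E: "x0 \<in> extremities X" using x0(1) g1(1) unfolding partition12_def by blast
  show ?thesis
    using tw.nST_single_N[OF x0E x0(2)] tw.nST_single_W[OF x0E x0(2)] tw.nST_single_M[OF x0E x0(2)] tw.nST_single_crown[OF x0E x0(2)]
    by blast
qed

end
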